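(* Let $L/K$ be a finite separable field extension of degree $[L:K]=p^e$, where $p$ is an odd prime and $e\geq 1$, and suppose that $L/K$ admits a Hopf--Galois structure of cyclic type. Let $\widetilde{L}$ be the normal closure of $L/K$. Then for every extension $L'/K$ parallel to $L/K$, the following are equivalent: (1) $L'/K$ admits a Hopf--Galois structure of cyclic type; (2) $L'/K$ is conjugate to $L/K$, i.e. $L'=g(L)$ for some $g\in \mathrm{Gal}(\widetilde{L}/K)$.
   Context: For a finite separable extension $L/K$ with normal closure $\widetilde{L}$, put $G=\mathrm{Gal}(\widetilde{L}/K)$ and $G'=\mathrm{Gal}(\widetilde{L}/L)$, and let $\lambda:G\to\mathrm{Sym}(G/G')$, $\lambda(g)(hG')=ghG'$. By Greither--Pareigis, Hopf--Galois structures on $L/K$ correspond to regular subgroups $N$ of $\mathrm{Sym}(G/G')$ (transitive with trivial point stabilisers) normalised by $\lambda(G)$; the isomorphism class of $N$ is the type of the structure. Thus "$L/K$ admits a Hopf--Galois structure of cyclic type" means there is such a regular subgroup $N$ which is cyclic (necessarily of order $[L:K]$). An extension $L'/K$ is parallel to $L/K$ if $L'$ is an intermediate field of $\widetilde{L}/K$ with $[L':K]=[L:K]$. *)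

theory Defs
  imports "HOL-Algebra.Left_Coset" "HOL-Algebra.Bij" "HOL-Algebra.Generated_Groups"
    "HOL-Computational_Algebra.Primes"
begin

text \<open>Group-theoretic (Greither--Pareigis) translation. G = Gal(Ltilde/K),
  H = Gal(Ltilde/L) a subgroup; the coset space G/H is lcosets G H.\<close>

definition lam :: "('a, 'b) monoid_scheme \<Rightarrow> 'a set \<Rightarrow> 'a \<Rightarrow> ('a set \<Rightarrow> 'a set)" where
  "lam G H g = (\<lambda>C \<in> lcosets\<^bsub>G\<^esub> H. g <#\<^bsub>G\<^esub> C)"

definition regular_subgroup :: "'x set \<Rightarrow> ('x \<Rightarrow> 'x) set \<Rightarrow> bool" where
  "regular_subgroup X N \<longleftrightarrow>
     subgroup N (BijGroup X) \<and>
     (\<forall>x\<in>X. \<forall>y\<in>X. \<exists>\<sigma>\<in>N. \<sigma> x = y) \<and>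
     (\<forall>\<sigma>\<in>N. \<forall>x\<in>X. \<sigma> x = x \<longrightarrow> \<sigma> = \<one>\<^bsub>BijGroup X\<^esub>)"

definition cyclic_subgroup :: "('c, 'd) monoid_scheme \<Rightarrow> 'c set \<Rightarrow> bool" where
  "cyclic_subgroup M N \<longleftrightarrow> (\<exists>\<sigma>\<in>N. N = generate M {\<sigma>})"

text \<open>The extension corresponding to subgroup H admits a Hopf--Galois structure of cyclic type:
  there is a cyclic regular subgroup N of Sym(G/H) normalised by lambda(G).\<close>
definition HGS_cyclic :: "('a, 'b) monoid_scheme \<Rightarrow> 'a set \<Rightarrow> bool" where
  "HGS_cyclic G H \<longleftrightarrow>
    (\<exists>N. regular_subgroup (lcosets\<^bsub>G\<^esub> H) N \<and>
         cyclic_subgroup (BijGroup (lcosets\<^bsub>G\<^esub> H)) N \<and>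
         (\<forall>g\<in>carrier G. \<forall>\<eta>\<in>N.
            lam G H g \<otimes>\<^bsub>BijGroup (lcosets\<^bsub>G\<^esub> H)\<^esub> \<eta>
              \<otimes>\<^bsub>BijGroup (lcosets\<^bsub>G\<^esub> H)\<^esub> inv\<^bsub>BijGroup (lcosets\<^bsub>G\<^esub> H)\<^esub> (lam G H g) \<in> N))"

end

theory Submission
  imports Defs "HOL-Number_Theory.Number_Theory" "HOL-Algebra.Group_Action"
begin

text \<open>
  A cyclic Hopf--Galois structure on \<open>G/K\<close> is a cyclic regular subgroup \<open>\<langle>\<sigma>\<rangle>\<close> of \<open>Sym(G/K)\<close>
  normalised by \<open>\<lambda>(G)\<close>. Numbering the cosets by \<open>\<sigma>\<^sup>k K \<mapsto> k\<close> identifies \<open>G/K\<close> with \<open>\<int>/p\<^sup>e\<close>,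
  on which \<open>G\<close> then acts by affine maps \<open>x \<mapsto> A g x + B g\<close>. Doing this for \<open>G'\<close> and for \<open>H\<close>
  gives two such actions: the first is faithful because \<open>G'\<close> is core-free, and there \<open>G'\<close> is the
  stabiliser of \<open>0\<close>, so it embeds into the cyclic group \<open>(\<int>/p\<^sup>e)\<^sup>\<times>\<close>.

  The heart of the argument shows that no non-trivial element of \<open>G'\<close> acts on \<open>G/H\<close> as a
  translation. It uses an element \<open>g0\<close> with \<open>A g0 \<equiv> 1 (mod p)\<close> that moves \<open>0\<close> modulo \<open>p\<close> in the
  second action (it exists because that action is transitive), commutators with \<open>g0\<close>, and the
  fact that the translations of order \<open>p\<close> in the first action are the powers of a single one.
  Consequently the affine map by which a generator of \<open>G'\<close> acts on \<open>G/H\<close> has a fixed point \<open>g H\<close>,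
  so \<open>G' \<subseteq> g H g\<inverse>\<close>, and both have the same order. Conversely, the equivariant bijection
  \<open>C \<mapsto> C g\<inverse>\<close> of coset spaces transports a cyclic structure from \<open>G/G'\<close> to \<open>G/g G' g\<inverse>\<close>.
\<close>

section \<open>Arithmetic modulo powers of an odd prime\<close>

lemma card_image_le_if_factors:
  assumes "finite (g ` S)" and factors: "\<And>x y. x \<in> S \<Longrightarrow> y \<in> S \<Longrightarrow> g x = g y \<Longrightarrow> f x = f y"
  shows "card (f ` S) \<le> card (g ` S)"
proof -
  let ?h = "\<lambda>v. f (inv_into S g v)"
  have "f ` S \<subseteq> ?h ` (g ` S)"
  proof
    fix y assume "y \<in> f ` S"
    then obtain x where x: "x \<in> S" "y = f x" by blast
    have "inv_into S g (g x) \<in> S" "g (inv_into S g (g x)) = g x"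
      using x(1) by (auto intro: inv_into_into f_inv_into_f)
    then have "y = ?h (g x)" using factors[of x "inv_into S g (g x)"] x by simp
    then show "y \<in> ?h ` (g ` S)" using x(1) by blast
  qed
  then have "card (f ` S) \<le> card (?h ` (g ` S))" using assms(1) by (intro card_mono) auto
  also have "\<dots> \<le> card (g ` S)" using assms(1) by (rule card_image_le)
  finally show ?thesis .
qed

lemma exists_nat_cong_solution:
  fixes a b q :: int
  assumes "coprime a q" "q > 0"
  shows "\<exists>m::nat. [a * int m = b] (mod q)"
proof -
  obtain i where i: "[a * i = 1] (mod q)" using assms(1) cong_solve_coprime_int by blast
  define m where "m = nat ((b * i) mod q)"
  have "int m = (b * i) mod q" unfolding m_def using assms(2) by simp
  then have "[a * int m = a * (b * i)] (mod q)" by (intro cong_mult cong_refl) (simp add: cong_def)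
  also have "a * (b * i) = b * (a * i)" by (simp add: algebra_simps)
  also have "[b * (a * i) = b * 1] (mod q)" using i by (intro cong_mult cong_refl)
  finally show ?thesis by auto
qed

lemma cong_one_imp_coprime:
  fixes u q :: int
  shows "[u = 1] (mod q) \<Longrightarrow> coprime u q"
  using coprime_cong_cong_left by fastforce

lemma cong_one_imp_not_dvd:
  fixes u q :: int
  assumes "[u = 1] (mod q)" "\<not> is_unit q"
  shows "\<not> q dvd u"
  using cong_one_imp_coprime[OF assms(1)] assms(2) coprime_absorb_right by auto

lemma one_plus_mult_power_cong:
  fixes q c :: int
  shows "[(1 + q * c) ^ k = 1 + int k * q * c] (mod q\<^sup>2)"
proof (induction k)
  case (Suc k)
  have "(1 + q * c) ^ Suc k = (1 + q * c) * (1 + q * c) ^ k" by simp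
  also have "[\<dots> = (1 + q * c) * (1 + int k * q * c)] (mod q\<^sup>2)"
    using Suc by (intro cong_mult cong_refl)
  also have "(1 + q * c) * (1 + int k * q * c) = 1 + int (Suc k) * q * c + q\<^sup>2 * (int k * c * c)"
    by (simp add: algebra_simps power2_eq_square)
  also have "[\<dots> = 1 + int (Suc k) * q * c] (mod q\<^sup>2)"
    by (simp add: cong_iff_dvd_diff)
  finally show ?case .
qed simp

lemma geometric_sum_one_plus_mult_cong:
  fixes q c :: int
  shows "[2 * (\<Sum>i<k. (1 + q * c) ^ i) = 2 * int k + q * c * int k * (int k - 1)] (mod q\<^sup>2)"
proof (induction k)
  case (Suc k)
  have "2 * (\<Sum>i<Suc k. (1 + q * c) ^ i) = 2 * (\<Sum>i<k. (1 + q * c) ^ i) + 2 * (1 + q * c) ^ k"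
    by (simp add: algebra_simps)
  also have "[\<dots> = (2 * int k + q * c * int k * (int k - 1)) + 2 * (1 + int k * q * c)] (mod q\<^sup>2)"
    using Suc one_plus_mult_power_cong by (intro cong_add cong_mult cong_refl)
  also have "(2 * int k + q * c * int k * (int k - 1)) + 2 * (1 + int k * q * c)
      = 2 * int (Suc k) + q * c * int (Suc k) * (int (Suc k) - 1)"
    by (simp add: algebra_simps)
  finally show ?case .
qed simp

text \<open>The oddness of \<open>q\<close> makes \<open>q (q - 1) / 2\<close> a multiple of \<open>q\<close>.\<close>
lemma geometric_sum_odd_cong:
  fixes q a :: int
  assumes "odd q" "q \<ge> 0" "[a = 1] (mod q)"
  shows "[(\<Sum>i<nat q. a ^ i) = q] (mod q\<^sup>2)"
proof -
  obtain c where a: "a = 1 + q * c"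
    using assms(3) by (metis cong_iff_lin cong_sym)
  obtain h where h: "q - 1 = 2 * h" using assms(1) by (auto elim: oddE)
  have "[2 * (\<Sum>i<nat q. a ^ i) = 2 * q + q * c * q * (q - 1)] (mod q\<^sup>2)"
    using geometric_sum_one_plus_mult_cong[of q c "nat q"] assms(2) a by simp
  also have "2 * q + q * c * q * (q - 1) = 2 * q + q\<^sup>2 * (2 * c * h)"
    using h by (simp add: algebra_simps power2_eq_square)
  also have "[\<dots> = 2 * q] (mod q\<^sup>2)" by (simp add: cong_iff_dvd_diff)
  finally have "[2 * (\<Sum>i<nat q. a ^ i) = 2 * q] (mod q\<^sup>2)" .
  moreover have "coprime 2 (q\<^sup>2)" using assms(1) by simp
  ultimately show ?thesis using cong_mult_lcancel by blast
qed

lemma geometric_sum_mult: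
  fixes a :: "'a::comm_ring_1"
  shows "(\<Sum>i<m * k. a ^ i) = (\<Sum>i<m. a ^ i) * (\<Sum>i<k. (a ^ m) ^ i)"
proof -
  have block: "(\<Sum>i\<in>{j * m..<j * m + m}. a ^ i) = (\<Sum>i<m. a ^ i) * (a ^ m) ^ j" for j
  proof -
    have "(\<Sum>i\<in>{j * m..<j * m + m}. a ^ i) = (\<Sum>i<m. a ^ (j * m + i))"
      using sum.shift_bounds_nat_ivl[of "\<lambda>i. a ^ i" 0 "j * m" m]
      by (simp add: lessThan_atLeast0 add.commute)
    also have "\<dots> = (\<Sum>i<m. a ^ i) * (a ^ m) ^ j"
      by (simp add: sum_power_add power_mult[symmetric] mult.commute)
    finally show ?thesis .
  qed
  show ?thesis
    using sum.nat_group[of "\<lambda>i. a ^ i" m k] by (simp add: block sum_distrib_left mult.commute)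
qed

lemma geometric_sum_prime_power:
  fixes p :: nat and a :: int
  assumes "prime p" "odd p" "[a = 1] (mod int p)"
  shows "\<exists>u. (\<Sum>i<p ^ j. a ^ i) = int p ^ j * u \<and> [u = 1] (mod int p)"
proof (induction j)
  case 0 then show ?case by (intro exI[of _ 1]) simp
next
  case (Suc j)
  then obtain u where u: "(\<Sum>i<p ^ j. a ^ i) = int p ^ j * u" "[u = 1] (mod int p)" by blast
  have "[a ^ p ^ j = 1] (mod int p)" using cong_pow[OF assms(3)] by simp
  then have "[(\<Sum>i<p. (a ^ p ^ j) ^ i) = int p] (mod (int p)\<^sup>2)"
    using geometric_sum_odd_cong[of "int p"] assms(2) by simp
  then obtain t where t: "(\<Sum>i<p. (a ^ p ^ j) ^ i) = int p + (int p)\<^sup>2 * t"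
    by (metis cong_iff_lin cong_sym)
  have "(\<Sum>i<p ^ Suc j. a ^ i) = (\<Sum>i<p ^ j. a ^ i) * (\<Sum>i<p. (a ^ p ^ j) ^ i)"
    by (simp add: geometric_sum_mult[symmetric] mult.commute)
  also have "\<dots> = int p ^ Suc j * (u * (1 + int p * t))"
    using u(1) t by (simp add: algebra_simps power2_eq_square)
  finally have "(\<Sum>i<p ^ Suc j. a ^ i) = int p ^ Suc j * (u * (1 + int p * t))" .
  moreover have "[u * (1 + int p * t) = 1] (mod int p)"
    using cong_mult[OF u(2), of "1 + int p * t" 1] by (simp add: cong_iff_dvd_diff)
  ultimately show ?case by blast
qed

lemma power_prime_power_cong_one:
  fixes p :: nat and a :: int
  assumes "prime p" "odd p" "[a = 1] (mod int p)" "[a = 1] (mod int p ^ t)"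
  shows "[a ^ p ^ j = 1] (mod int p ^ (t + j))"
proof -
  obtain u where u: "(\<Sum>i<p ^ j. a ^ i) = int p ^ j * u"
    using geometric_sum_prime_power[OF assms(1-3)] by blast
  have "int p ^ t * int p ^ j dvd (a - 1) * (\<Sum>i<p ^ j. a ^ i)"
    using assms(4) u by (simp add: cong_iff_dvd_diff mult_dvd_mono)
  then show ?thesis by (simp add: power_diff_1_eq[symmetric] power_add cong_iff_dvd_diff)
qed

lemma affine_fixed_point_if_dvd:
  fixes a c m w n :: int
  assumes "a - 1 = m * w" "coprime w n" "m dvd c"
  shows "\<exists>y. [a * y + c = y] (mod n)"
proof -
  obtain c' where c': "c = m * c'" using assms(3) by (elim dvdE)
  obtain i where i: "[w * i = 1] (mod n)" using assms(2) cong_solve_coprime_int by blast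
  have "a * (- c' * i) + c - (- c' * i) = m * c' * (1 - w * i)"
    using assms(1) c' by (simp add: algebra_simps)
  moreover have "n dvd 1 - w * i" using i by (simp add: cong_iff_dvd_diff dvd_diff_commute)
  ultimately have "[a * (- c' * i) + c = - c' * i] (mod n)" by (simp add: cong_iff_dvd_diff)
  then show ?thesis by blast
qed

text \<open>The affine map \<open>y \<mapsto> a y + c\<close> of \<open>\<int>/p\<^sup>e\<close> has a fixed point as soon as its order is
  the multiplicative order of \<open>a\<close>: the \<open>k\<close>-th iterate is \<open>y \<mapsto> a\<^sup>k y + c (1 + a + \<dots> + a\<^sup>k\<^sup>-\<^sup>1)\<close>.\<close>
lemma affine_fixed_point_prime_power:
  fixes p e :: nat and a c :: int
  assumes "prime p" "odd p"
    and order: "\<And>k. [a ^ k = 1] (mod int p ^ e) \<Longrightarrow> int p ^ e dvd c * (\<Sum>i<k. a ^ i)"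
  shows "\<exists>y. [a * y + c = y] (mod int p ^ e)"
proof (cases "[a = 1] (mod int p ^ e)")
  case True
  then have "[a * 0 + c = 0] (mod int p ^ e)" using order[of 1] by (simp add: cong_0_iff)
  then show ?thesis by blast
next
  case False
  have "a - 1 \<noteq> 0" "\<not> is_unit (int p)" using False assms(1) by (auto simp: prime_int_iff)
  then obtain w where aw: "a - 1 = int p ^ multiplicity (int p) (a - 1) * w" and "\<not> int p dvd w"
    by (rule multiplicity_decompose')
  define t where "t = multiplicity (int p) (a - 1)"
  have "coprime (int p) w" using \<open>\<not> int p dvd w\<close> assms(1) by (intro prime_imp_coprime) simp
  then have cw: "coprime w (int p ^ e)" by (simp add: coprime_commute)
  have "t < e"
  proof (rule ccontr)
    assume "\<not> t < e"
    then have "int p ^ e dvd int p ^ t * w" by (intro dvd_mult2 le_imp_power_dvd) simp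
    then have "int p ^ e dvd a - 1" using aw unfolding t_def by simp
    then show False using False by (simp add: cong_iff_dvd_diff)
  qed
  have "int p ^ t dvd c"
  proof (cases "t = 0")
    case False
    then have "int p dvd int p ^ t * w" by simp
    then have a_cong_p: "[a = 1] (mod int p)"
      using aw unfolding t_def by (simp add: cong_iff_dvd_diff)
    obtain u where u: "(\<Sum>i<p ^ (e - t). a ^ i) = int p ^ (e - t) * u" "[u = 1] (mod int p)"
      using geometric_sum_prime_power[OF assms(1,2) a_cong_p] by blast
    have "[a = 1] (mod int p ^ t)" unfolding t_def cong_iff_dvd_diff by (rule multiplicity_dvd)
    then have "[a ^ p ^ (e - t) = 1] (mod int p ^ e)"
      using power_prime_power_cong_one[OF assms(1,2) a_cong_p, of t "e - t"] \<open>t < e\<close> by simp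
    then have "int p ^ e dvd c * (int p ^ (e - t) * u)" using order u(1) by metis
    moreover have "int p ^ e = int p ^ (e - t) * int p ^ t"
      using \<open>t < e\<close> by (simp add: power_add[symmetric])
    ultimately have "int p ^ (e - t) * int p ^ t dvd int p ^ (e - t) * (c * u)"
      by (simp add: mult_ac)
    then have "int p ^ t dvd c * u" using assms(1) by (simp add: prime_gt_0_nat)
    moreover have "coprime u (int p)" using u(2) by (rule cong_one_imp_coprime)
    then have "coprime (int p ^ t) u" by (simp add: coprime_commute)
    ultimately show ?thesis using coprime_dvd_mult_left_iff by blast
  qed simp
  then show ?thesis using affine_fixed_point_if_dvd[OF aw[folded t_def] cw] by blast
qed

lemma fermat_theorem_int:
  fixes p :: nat and a :: int
  assumes "prime p" "\<not> int p dvd a"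
  shows "[a ^ (p - 1) = 1] (mod int p)"
proof -
  interpret residues_prime p "residue_ring (int p)" using assms(1) by unfold_locales
  have "coprime a (int p)"
    using assms prime_imp_coprime[of "int p" a] by (simp add: coprime_commute)
  then show ?thesis using euler_theorem prime_totient_eq by simp
qed

lemma fermat_prime_power_int:
  fixes p :: nat and a :: int
  assumes "prime p" "\<not> int p dvd a"
  shows "[a ^ p ^ j = a] (mod int p)"
proof (induction j)
  case (Suc j)
  have "a ^ p ^ Suc j = (a ^ p ^ j) ^ p" by (simp add: power_mult[symmetric] mult.commute)
  also have "[\<dots> = a ^ p] (mod int p)" using Suc by (rule cong_pow)
  also have "a ^ p = a * a ^ (p - 1)"
    using assms(1) prime_gt_0_nat by (metis Suc_diff_1 power_Suc)
  also have "[a * a ^ (p - 1) = a * 1] (mod int p)"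
    using fermat_theorem_int[OF assms] by (intro cong_mult cong_refl)
  finally show ?case by simp
qed simp

section \<open>Affine representations\<close>

text \<open>An element \<open>g\<close> acts on \<open>\<int>/n\<close> by \<open>x \<mapsto> A g * x + B g\<close>; both coefficients are stored as
  representatives in \<open>{0..<n}\<close>.\<close>
locale affine_rep = group G for G (structure) +
  fixes n :: int and A B :: "'a \<Rightarrow> int"
  assumes modulus_gt_1: "n > 1"
    and A_range: "g \<in> carrier G \<Longrightarrow> A g \<in> {0..<n}"
    and B_range: "g \<in> carrier G \<Longrightarrow> B g \<in> {0..<n}"
    and A_mult: "g \<in> carrier G \<Longrightarrow> h \<in> carrier G \<Longrightarrow> [A (g \<otimes> h) = A g * A h] (mod n)"
    and B_mult: "g \<in> carrier G \<Longrightarrow> h \<in> carrier G \<Longrightarrow> [B (g \<otimes> h) = A g * B h + B g] (mod n)"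
    and A_one: "A \<one> = 1"
    and B_one: "B \<one> = 0"
begin

definition stabilizer0 :: "'a set" where
  "stabilizer0 = {g \<in> carrier G. B g = 0}"

lemma stabilizer0_iff: "g \<in> stabilizer0 \<longleftrightarrow> g \<in> carrier G \<and> B g = 0"
  by (simp add: stabilizer0_def)

lemma A_eqI: "g \<in> carrier G \<Longrightarrow> [A g = x] (mod n) \<Longrightarrow> 0 \<le> x \<Longrightarrow> x < n \<Longrightarrow> A g = x"
  using A_range cong_less_imp_eq_int by fastforce

lemma B_eqI: "g \<in> carrier G \<Longrightarrow> [B g = x] (mod n) \<Longrightarrow> 0 \<le> x \<Longrightarrow> x < n \<Longrightarrow> B g = x"
  using B_range cong_less_imp_eq_int by fastforce

lemma A_eq_oneI: "g \<in> carrier G \<Longrightarrow> [A g = 1] (mod n) \<Longrightarrow> A g = 1"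
  using A_eqI modulus_gt_1 by simp

lemma B_eq_zeroI: "g \<in> carrier G \<Longrightarrow> [B g = 0] (mod n) \<Longrightarrow> B g = 0"
  using B_eqI modulus_gt_1 by simp

lemma B_eq_B_if_cong: "g \<in> carrier G \<Longrightarrow> h \<in> carrier G \<Longrightarrow> [B g = B h] (mod n) \<Longrightarrow> B g = B h"
  using B_eqI B_range by simp

lemma B_zero_if_dvd: "g \<in> carrier G \<Longrightarrow> n dvd B g \<Longrightarrow> B g = 0"
  using B_eq_zeroI by (simp add: cong_0_iff)

lemma A_pow: "g \<in> carrier G \<Longrightarrow> [A (g [^] k) = A g ^ k] (mod n)"
proof (induction k)
  case (Suc k)
  have "[A (g [^] Suc k) = A g * A (g [^] k)] (mod n)"
    using Suc.prems A_mult[of g "g [^] k"] by (simp only: nat_pow_Suc2) simp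
  also have "[A g * A (g [^] k) = A g * A g ^ k] (mod n)"
    using Suc by (intro cong_mult cong_refl)
  finally show ?case by simp
qed (simp add: A_one)

lemma B_pow: "g \<in> carrier G \<Longrightarrow> [B (g [^] k) = B g * (\<Sum>i<k. A g ^ i)] (mod n)"
proof (induction k)
  case (Suc k)
  have "[B (g [^] Suc k) = A g * B (g [^] k) + B g] (mod n)"
    using Suc.prems B_mult[of g "g [^] k"] by (simp only: nat_pow_Suc2) simp
  also have "[A g * B (g [^] k) + B g = A g * (B g * (\<Sum>i<k. A g ^ i)) + B g] (mod n)"
    using Suc by (intro cong_add cong_mult cong_refl)
  also have "A g * (B g * (\<Sum>i<k. A g ^ i)) + B g = B g * (\<Sum>i<Suc k. A g ^ i)"
    by (simp add: sum_distrib_left lessThan_Suc_eq_insert_0 sum.reindex algebra_simps)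
  finally show ?case .
qed (simp add: B_one)

lemma A_pow_eq_one: "g \<in> carrier G \<Longrightarrow> A g = 1 \<Longrightarrow> A (g [^] (k::nat)) = 1"
  using A_pow[of g k] A_eq_oneI[of "g [^] k"] by simp

lemma B_pow_translation: "g \<in> carrier G \<Longrightarrow> A g = 1 \<Longrightarrow> [B (g [^] k) = int k * B g] (mod n)"
  using B_pow[of g k] by (simp add: mult.commute)

lemma A_inv: "g \<in> carrier G \<Longrightarrow> [A g * A (inv g) = 1] (mod n)"
  using A_mult[of g "inv g"] A_one by (simp add: cong_sym)

lemma B_inv: "g \<in> carrier G \<Longrightarrow> [A g * B (inv g) + B g = 0] (mod n)"
  using B_mult[of g "inv g"] B_one by (simp add: cong_sym)

lemma A_coprime: "g \<in> carrier G \<Longrightarrow> coprime (A g) n"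
  using A_inv by (metis coprime_iff_invertible_int)

lemma A_pow_cong_one:
  "g \<in> carrier G \<Longrightarrow> q dvd n \<Longrightarrow> [A g = 1] (mod q) \<Longrightarrow> [A (g [^] (k::nat)) = 1] (mod q)"
  using cong_dvd_modulus[OF A_pow] cong_pow[of "A g" 1 q k] by (metis cong_trans power_one)

lemma A_not_dvd: "g \<in> carrier G \<Longrightarrow> prime q \<Longrightarrow> q dvd n \<Longrightarrow> \<not> q dvd A g"
  using A_coprime by (metis coprime_common_divisor not_prime_unit)

lemma A_power_of_primroot:
  assumes "residue_primroot (nat n) r" "g \<in> carrier G"
  shows "\<exists>i. [A g = int r ^ i] (mod n)"
proof -
  have A: "0 \<le> A g" "A g < n" using A_range[OF assms(2)] by auto
  have int_nat: "int (nat (A g)) = A g" "int (nat n) = n" using A modulus_gt_1 by auto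
  have "coprime (nat (A g)) (nat n)"
    using A_coprime[OF assms(2)] coprime_int_iff[of "nat (A g)" "nat n"] unfolding int_nat by blast
  moreover have "A g \<noteq> 0" using A_coprime[OF assms(2)] modulus_gt_1 by auto
  ultimately have "nat (A g) \<in> totatives (nat n)" using A by (auto simp: totatives_def)
  then obtain i where "nat (A g) = r ^ i mod nat n"
    using residue_primroot_is_generator[OF _ assms(1)] modulus_gt_1 by (auto simp: bij_betw_def)
  then have "int (nat (A g)) = int r ^ i mod int (nat n)" by (simp add: of_nat_mod)
  then have "[A g = int r ^ i] (mod n)" unfolding int_nat by (simp add: cong_def A)
  then show ?thesis by blast
qed

lemma A_inv_mult_cong:
  assumes "x \<in> carrier G" "w \<in> carrier G" "[A w = A x * c] (mod n)"
  shows "[A (inv x \<otimes> w) = c] (mod n)"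
proof -
  have "[A (inv x \<otimes> w) = A (inv x) * A w] (mod n)" using assms A_mult by simp
  also have "[A (inv x) * A w = A (inv x) * (A x * c)] (mod n)"
    using assms(3) by (intro cong_mult cong_refl)
  also have "A (inv x) * (A x * c) = (A x * A (inv x)) * c" by (simp add: algebra_simps)
  also have "[(A x * A (inv x)) * c = 1 * c] (mod n)"
    using A_inv[OF assms(1)] by (intro cong_mult cong_refl)
  finally show ?thesis by simp
qed

lemma A_commutator:
  assumes "g \<in> carrier G" "h \<in> carrier G"
  shows "A (g \<otimes> h \<otimes> inv g \<otimes> inv h) = 1"
proof -
  have "[A (g \<otimes> h \<otimes> inv g \<otimes> inv h) = A (g \<otimes> h \<otimes> inv g) * A (inv h)] (mod n)"
    using assms by (simp add: A_mult)
  also have "[A (g \<otimes> h \<otimes> inv g) * A (inv h) = (A (g \<otimes> h) * A (inv g)) * A (inv h)] (mod n)"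
    using assms by (intro cong_mult cong_refl A_mult) auto
  also have "[(A (g \<otimes> h) * A (inv g)) * A (inv h) = ((A g * A h) * A (inv g)) * A (inv h)] (mod n)"
    using assms by (intro cong_mult cong_refl A_mult) auto
  also have "((A g * A h) * A (inv g)) * A (inv h) = (A g * A (inv g)) * (A h * A (inv h))"
    by (simp add: algebra_simps)
  also have "[(A g * A (inv g)) * (A h * A (inv h)) = 1 * 1] (mod n)"
    using assms by (intro cong_mult A_inv)
  finally show ?thesis using assms by (intro A_eq_oneI) auto
qed

lemma B_commutator:
  assumes g: "g \<in> carrier G" and h: "h \<in> carrier G"
  shows "[B (g \<otimes> h \<otimes> inv g \<otimes> inv h) = (A g - 1) * B h + (1 - A h) * B g] (mod n)"
proof -
  let ?a = "A g" and ?b = "B g" and ?a' = "A (inv g)" and ?b' = "B (inv g)"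
  let ?c = "A h" and ?d = "B h" and ?d' = "B (inv h)"
  let ?X1 = "A (g \<otimes> h \<otimes> inv g) * ?d' + B (g \<otimes> h \<otimes> inv g)"
  let ?X2 = "(A (g \<otimes> h) * ?a') * ?d' + (A (g \<otimes> h) * ?b' + B (g \<otimes> h))"
  let ?X3 = "((?a * ?c) * ?a') * ?d' + ((?a * ?c) * ?b' + (?a * ?d + ?b))"
  let ?R = "(?a - 1) * ?d + (1 - ?c) * ?b"
  have "[B (g \<otimes> h \<otimes> inv g \<otimes> inv h) = ?X1] (mod n)"
    using g h by (simp add: B_mult)
  also have "[?X1 = ?X2] (mod n)"
    using g h by (intro cong_add cong_mult cong_refl A_mult B_mult) auto
  also have "[?X2 = ?X3] (mod n)"
    using g h by (intro cong_add cong_mult cong_refl A_mult B_mult) auto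
  also have "?X3 = (?c * ?d') * (?a * ?a') + ?c * (?a * ?b' + ?b) + ?R + ?d"
    by (simp add: algebra_simps)
  also have "[(?c * ?d') * (?a * ?a') + ?c * (?a * ?b' + ?b) + ?R + ?d
      = (?c * ?d') * 1 + ?c * 0 + ?R + ?d] (mod n)"
    using g by (intro cong_add cong_mult cong_refl A_inv B_inv)
  also have "(?c * ?d') * 1 + ?c * 0 + ?R + ?d = (?c * ?d' + ?d) + ?R"
    by (simp add: algebra_simps)
  also have "[(?c * ?d' + ?d) + ?R = 0 + ?R] (mod n)"
    using h by (intro cong_add cong_refl B_inv)
  finally show ?thesis by simp
qed

lemma subgroup_stabilizer0: "subgroup stabilizer0 G"
proof (rule subgroupI)
  fix g h assume g: "g \<in> stabilizer0" and h: "h \<in> stabilizer0"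
  then show "g \<otimes> h \<in> stabilizer0"
    using B_mult[of g h] B_eq_zeroI by (simp add: stabilizer0_def)
  have "[A g * B (inv g) = 0] (mod n)" using B_inv[of g] g by (simp add: stabilizer0_def)
  then have "n dvd B (inv g)"
    using A_coprime[of g] g by (simp add: stabilizer0_def cong_0_iff coprime_dvd_mult_right_iff coprime_commute)
  then show "inv g \<in> stabilizer0" using g B_zero_if_dvd by (simp add: stabilizer0_def)
qed (auto simp: stabilizer0_def B_one)

lemma fixed_point_pow:
  assumes g: "g \<in> carrier G" and y: "[A g * y + B g = y] (mod n)"
  shows "[A (g [^] (k::nat)) * y + B (g [^] k) = y] (mod n)"
proof (induction k)
  case (Suc k)
  let ?h = "g [^] k"
  have "g [^] Suc k = g \<otimes> ?h" using g by (rule nat_pow_Suc2)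
  then have "[A (g [^] Suc k) * y + B (g [^] Suc k) = (A g * A ?h) * y + (A g * B ?h + B g)] (mod n)"
    using g by (simp add: cong_add cong_mult A_mult B_mult)
  also have "(A g * A ?h) * y + (A g * B ?h + B g) = A g * (A ?h * y + B ?h) + B g"
    by (simp add: algebra_simps)
  also have "[A g * (A ?h * y + B ?h) + B g = A g * y + B g] (mod n)"
    using Suc by (intro cong_add cong_mult cong_refl)
  finally show ?case using y by (rule cong_trans)
qed (simp add: A_one B_one)

lemma stabilizer0_pow:
  assumes "g \<in> stabilizer0" shows "g [^] (k::nat) \<in> stabilizer0"
proof -
  have g: "g \<in> carrier G" "B g = 0" using assms by (auto simp: stabilizer0_def)
  then have "[B (g [^] k) = 0] (mod n)" using B_pow[of g k] by simp
  then show ?thesis using g B_eq_zeroI by (simp add: stabilizer0_def)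
qed

end

locale faithful_affine_rep = affine_rep +
  assumes faithful: "g \<in> carrier G \<Longrightarrow> A g = 1 \<Longrightarrow> B g = 0 \<Longrightarrow> g = \<one>"
begin

lemma eq_if_A_B_eq:
  assumes g: "g \<in> carrier G" and h: "h \<in> carrier G" and "A g = A h" "B g = B h"
  shows "g = h"
proof -
  have lin: "A (inv h \<otimes> g) = 1" using A_inv_mult_cong[OF h g, of 1] assms A_eq_oneI by simp
  have "[B (inv h \<otimes> g) = A (inv h) * B h + B (inv h)] (mod n)"
    using assms B_mult[of "inv h" g] by simp
  also have "[A (inv h) * B h + B (inv h) = 0] (mod n)"
    using B_mult[of "inv h" h] h B_one by (simp add: cong_sym)
  finally have "B (inv h \<otimes> g) = 0" using g h B_eq_zeroI by simp
  then have "inv h \<otimes> g = \<one>" using lin faithful g h by simp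
  then show ?thesis using g h inv_solve_left[of \<one> h g] by simp
qed

text \<open>The stabiliser of \<open>0\<close> embeds via \<open>A\<close> into the units modulo \<open>n\<close>; if these are
  generated by \<open>r\<close>, the usual proof that subgroups of cyclic groups are cyclic applies.\<close>
lemma stabilizer0_cyclic:
  assumes log: "\<And>g. g \<in> carrier G \<Longrightarrow> \<exists>i. [A g = r ^ i] (mod n)"
    and "[r ^ t = 1] (mod n)" "0 < t"
  shows "\<exists>w0\<in>stabilizer0. \<forall>w\<in>stabilizer0. \<exists>k::nat. w = w0 [^] k"
proof -
  note stab = subgroup_stabilizer0
  define D where "D = {i. 0 < i \<and> (\<exists>w\<in>stabilizer0. [A w = r ^ i] (mod n))}"
  have "[A \<one> = r ^ t] (mod n)" using assms(2) A_one by (simp add: cong_sym)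
  then have "t \<in> D" using assms(3) subgroup.one_closed[OF stab] unfolding D_def by blast
  define d where "d = (LEAST i. i \<in> D)"
  have "d \<in> D" unfolding d_def using \<open>t \<in> D\<close> by (rule LeastI)
  then obtain w0 where w0: "w0 \<in> stabilizer0" "[A w0 = r ^ d] (mod n)" unfolding D_def by blast
  have "\<exists>k::nat. w = w0 [^] k" if w: "w \<in> stabilizer0" for w
  proof -
    obtain i where i: "[A w = r ^ i] (mod n)" using log w stabilizer0_iff by blast
    define x where "x = w0 [^] (i div d)"
    have x: "x \<in> stabilizer0" unfolding x_def by (rule stabilizer0_pow[OF w0(1)])
    have "[A x = A w0 ^ (i div d)] (mod n)"
      unfolding x_def using w0(1) stabilizer0_iff A_pow by blast
    also have "[A w0 ^ (i div d) = (r ^ d) ^ (i div d)] (mod n)" using w0(2) by (rule cong_pow)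
    finally have "[A x * r ^ (i mod d) = (r ^ d) ^ (i div d) * r ^ (i mod d)] (mod n)"
      by (rule cong_scalar_right)
    also have "(r ^ d) ^ (i div d) * r ^ (i mod d) = r ^ i"
      by (simp add: power_mult[symmetric] power_add[symmetric])
    finally have "[A w = A x * r ^ (i mod d)] (mod n)" using i by (metis cong_sym_eq cong_trans)
    then have "[A (inv x \<otimes> w) = r ^ (i mod d)] (mod n)"
      using x w stabilizer0_iff by (intro A_inv_mult_cong) auto
    moreover have y: "inv x \<otimes> w \<in> stabilizer0"
      using x w subgroup.m_closed[OF stab] subgroup.m_inv_closed[OF stab] by blast
    moreover have "i mod d < d" using \<open>d \<in> D\<close> by (simp add: D_def)
    then have "i mod d \<notin> D" unfolding d_def using not_less_Least by blast
    ultimately have "[A (inv x \<otimes> w) = 1] (mod n)" unfolding D_def by auto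
    then have "inv x \<otimes> w = \<one>" using y faithful A_eq_oneI stabilizer0_iff by blast
    then have "w = x" using x w stabilizer0_iff inv_solve_left[of \<one> x w] by auto
    then show ?thesis unfolding x_def by blast
  qed
  then show ?thesis using w0(1) by blast
qed

end

section \<open>Two affine representations of odd prime power degree\<close>

lemma (in group) prime_power_order_imp_exists_order_prime:
  fixes p e :: nat
  assumes "x \<in> carrier G" "x [^] (p ^ e) = \<one>" "x \<noteq> \<one>"
  shows "\<exists>j. x [^] (p ^ j) \<noteq> \<one> \<and> (x [^] (p ^ j)) [^] p = \<one>"
proof -
  define j0 where "j0 = (LEAST j. x [^] (p ^ j) = \<one>)"
  have j0: "x [^] (p ^ j0) = \<one>" unfolding j0_def using assms(2) by (rule LeastI)
  have "j0 \<noteq> 0"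
  proof
    assume "j0 = 0"
    then show False using j0 assms(1,3) nat_pow_Suc[of x 0] by simp
  qed
  have "x [^] (p ^ (j0 - 1)) \<noteq> \<one>"
  proof
    assume "x [^] (p ^ (j0 - 1)) = \<one>"
    then have "j0 \<le> j0 - 1" unfolding j0_def by (rule Least_le)
    then show False using \<open>j0 \<noteq> 0\<close> by simp
  qed
  moreover have "(x [^] (p ^ (j0 - 1))) [^] p = x [^] (p ^ j0)"
    using assms(1) \<open>j0 \<noteq> 0\<close> by (cases j0) (simp_all add: nat_pow_pow mult.commute)
  ultimately show ?thesis using j0 by auto
qed

locale affine_rep_pair =
  R1: faithful_affine_rep G n A1 B1 + R2: affine_rep G n A2 B2
  for G (structure) and n :: int and A1 B1 A2 B2 +
  fixes p e :: nat
  assumes prime_p: "prime p" and odd_p: "odd p" and modulus_eq: "n = int p ^ e"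
    and transitive2: "\<And>b. b \<in> {0..<n} \<Longrightarrow> \<exists>g\<in>carrier G. B2 g = b"
begin

lemma p_gt_1: "int p > 1"
  using prime_p prime_gt_1_nat by simp

lemma prime_int_p: "prime (int p)"
  using prime_p by simp

lemma e_pos: "e > 0"
  using R1.modulus_gt_1 modulus_eq by (cases e) auto

lemma modulus_eq': "n = int p ^ (e - 1) * int p"
  using e_pos modulus_eq by (cases e) auto

lemma p_dvd_modulus: "int p dvd n"
  using modulus_eq' by simp

lemma cong_mod_p: "[x = y] (mod n) \<Longrightarrow> [x = y] (mod int p)"
  using p_dvd_modulus cong_dvd_modulus by blast

lemma A1_not_dvd: "g \<in> carrier G \<Longrightarrow> \<not> int p dvd A1 g"
  using R1.A_not_dvd prime_int_p p_dvd_modulus by blast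

lemma A2_not_dvd: "g \<in> carrier G \<Longrightarrow> \<not> int p dvd A2 g"
  using R2.A_not_dvd prime_int_p p_dvd_modulus by blast

lemma coprime_modulus_if_not_dvd: "\<not> int p dvd x \<Longrightarrow> coprime x n"
  using prime_imp_coprime[OF prime_int_p] modulus_eq by (simp add: coprime_commute)

lemma modulus_dvd_iff: "n dvd int p ^ (e - 1) * x \<longleftrightarrow> int p dvd x"
  using p_gt_1 by (simp add: modulus_eq' mult.commute[of _ "int p"])

lemma dvd_pow_pred_if_modulus_dvd: "n dvd int p * x \<Longrightarrow> int p ^ (e - 1) dvd x"
  using p_gt_1 by (simp add: modulus_eq' mult.commute[of _ "int p"])

lemma dvd_pow_pred_if_cong:
  assumes "[x = y] (mod n)" "int p ^ (e - 1) dvd y" shows "int p ^ (e - 1) dvd x"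
proof -
  have "int p ^ (e - 1) dvd n" by (simp add: modulus_eq')
  then have "int p ^ (e - 1) dvd x - y" using assms(1) dvd_trans unfolding cong_iff_dvd_diff by blast
  from dvd_add[OF this assms(2)] show ?thesis by simp
qed

lemma cong_mult_pow_pred:
  assumes "[x = y] (mod int p)" shows "[int p ^ (e - 1) * x = int p ^ (e - 1) * y] (mod n)"
proof -
  have "n dvd int p ^ (e - 1) * (x - y)"
    using assms modulus_dvd_iff[THEN iffD2] unfolding cong_iff_dvd_diff by blast
  then show ?thesis by (simp add: cong_iff_dvd_diff right_diff_distrib)
qed

lemma modulus_dvd_mult:
  assumes "[a = 1] (mod int p)" "int p ^ (e - 1) dvd b" shows "n dvd (a - 1) * b"
proof -
  have "int p * int p ^ (e - 1) dvd (a - 1) * b"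
    using mult_dvd_mono assms unfolding cong_iff_dvd_diff by blast
  then show ?thesis by (simp add: modulus_eq' mult.commute)
qed

lemma A1_pow_p_power_e:
  assumes g: "g \<in> carrier G" and "[A1 g = 1] (mod int p)"
  shows "A1 (g [^] (p ^ e)) = 1"
proof -
  have "[A1 g ^ p ^ e = 1] (mod int p ^ (1 + e))"
    using power_prime_power_cong_one[OF prime_p odd_p assms(2), of 1] assms(2) by simp
  then have "[A1 g ^ p ^ e = 1] (mod n)"
    unfolding modulus_eq by (rule cong_dvd_modulus) (simp add: le_imp_power_dvd)
  then show ?thesis using R1.A_eq_oneI[OF _ cong_trans[OF R1.A_pow[OF g]]] g by simp
qed

lemma pow_p_power_e_eq_one:
  assumes g: "g \<in> carrier G" and "[A1 g = 1] (mod int p)"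
  shows "g [^] (p ^ e) = \<one>"
proof -
  obtain u where "(\<Sum>i<p ^ e. A1 g ^ i) = int p ^ e * u"
    using geometric_sum_prime_power[OF prime_p odd_p assms(2)] by blast
  then have "[B1 (g [^] (p ^ e)) = 0] (mod n)"
    using R1.B_pow[OF g, of "p ^ e"] modulus_eq by (simp add: cong_0_iff cong_dvd_iff)
  then show ?thesis using R1.faithful R1.B_eq_zeroI A1_pow_p_power_e[OF assms] g by simp
qed

lemma A2_cong_one_if_A1_cong_one:
  assumes g: "g \<in> carrier G" and "[A1 g = 1] (mod int p)"
  shows "[A2 g = 1] (mod int p)"
proof -
  have "[A2 g = A2 g ^ p ^ e] (mod int p)"
    using fermat_prime_power_int[OF prime_p A2_not_dvd[OF g]] by (rule cong_sym)
  also have "[A2 g ^ p ^ e = A2 (g [^] (p ^ e))] (mod int p)"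
    using cong_mod_p[OF R2.A_pow[OF g]] by (rule cong_sym)
  also have "A2 (g [^] (p ^ e)) = 1"
    using pow_p_power_e_eq_one[OF assms] R2.A_one by simp
  finally show ?thesis .
qed

text \<open>Otherwise \<open>B2 mod p\<close> would factor through \<open>A1 mod p\<close>, which takes at most \<open>p - 1\<close>
  values, whereas \<open>B2\<close> takes all values because the second action is transitive.\<close>
lemma exists_p_element_moving_0:
  "\<exists>g\<in>carrier G. [A1 g = 1] (mod int p) \<and> \<not> int p dvd B2 g"
proof (rule ccontr)
  assume "\<not> ?thesis"
  then have fixes_mod_p: "int p dvd B2 k" if "k \<in> carrier G" "[A1 k = 1] (mod int p)" for k
    using that by blast
  have factors: "B2 g mod int p = B2 h mod int p"
    if g: "g \<in> carrier G" and h: "h \<in> carrier G" and gh: "A1 g mod int p = A1 h mod int p" for g h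
  proof -
    define k where "k = inv h \<otimes> g"
    have k: "k \<in> carrier G" using g h by (simp add: k_def)
    have "h \<otimes> k = g" using g h by (simp add: k_def R1.m_assoc[symmetric])
    have "[A1 k = A1 (inv h) * A1 g] (mod int p)"
      using cong_mod_p[OF R1.A_mult[of "inv h" g]] g h unfolding k_def by simp
    also have "[A1 (inv h) * A1 g = A1 (inv h) * A1 h] (mod int p)"
      using gh by (intro cong_mult cong_refl) (simp add: cong_def)
    also have "[A1 (inv h) * A1 h = 1] (mod int p)"
      using cong_mod_p[OF R1.A_inv[OF h]] by (simp add: mult.commute)
    finally have "int p dvd B2 k" using fixes_mod_p k by blast
    have "[B2 g = A2 h * B2 k + B2 h] (mod int p)"
      using cong_mod_p[OF R2.B_mult[OF h k]] \<open>h \<otimes> k = g\<close> by simp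
    also have "[A2 h * B2 k + B2 h = A2 h * 0 + B2 h] (mod int p)"
      using \<open>int p dvd B2 k\<close> by (intro cong_add cong_mult cong_refl) (simp add: cong_0_iff)
    finally show ?thesis by (simp add: cong_def)
  qed
  let ?ImA = "(\<lambda>g. A1 g mod int p) ` carrier G" and ?ImB = "(\<lambda>g. B2 g mod int p) ` carrier G"
  have onto: "{0..<int p} \<subseteq> ?ImB"
  proof
    fix b assume b: "b \<in> {0..<int p}"
    have "int p \<le> n" using p_dvd_modulus R1.modulus_gt_1 by (simp add: zdvd_imp_le)
    then obtain g where g: "g \<in> carrier G" "B2 g = b" using transitive2[of b] b by auto
    then have "b = B2 g mod int p" using b by simp
    then show "b \<in> ?ImB" using g(1) by blast
  qed
  have into: "?ImA \<subseteq> {1..<int p}"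
  proof (rule image_subsetI)
    fix g assume "g \<in> carrier G"
    then have "A1 g mod int p \<noteq> 0" using A1_not_dvd by (simp add: dvd_eq_mod_eq_0)
    moreover have "0 \<le> A1 g mod int p" "A1 g mod int p < int p" using p_gt_1 by simp_all
    ultimately show "A1 g mod int p \<in> {1..<int p}" by simp
  qed
  have "finite ?ImA" using into finite_atLeastLessThan_int by (rule finite_subset)
  have "?ImB \<subseteq> {0..<int p}" using p_gt_1 by auto
  then have "finite ?ImB" using finite_atLeastLessThan_int by (rule finite_subset)
  have "card {0..<int p} \<le> card ?ImB" using card_mono[OF \<open>finite ?ImB\<close> onto] .
  also have "\<dots> \<le> card ?ImA" by (rule card_image_le_if_factors[OF \<open>finite ?ImA\<close> factors])
  also have "\<dots> \<le> card {1..<int p}" using card_mono[OF _ into] by simp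
  finally show False using p_gt_1 by simp
qed

definition g0 :: 'a where
  "g0 = (SOME g. g \<in> carrier G \<and> [A1 g = 1] (mod int p) \<and> \<not> int p dvd B2 g)"

lemma g0: "g0 \<in> carrier G" "[A1 g0 = 1] (mod int p)" "[A2 g0 = 1] (mod int p)" "\<not> int p dvd B2 g0"
proof -
  show g0: "g0 \<in> carrier G" and A1_g0: "[A1 g0 = 1] (mod int p)" and "\<not> int p dvd B2 g0"
    using someI_ex[OF exists_p_element_moving_0[unfolded Bex_def]] unfolding g0_def by auto
  show "[A2 g0 = 1] (mod int p)" using g0 A1_g0 by (rule A2_cong_one_if_A1_cong_one)
qed

text \<open>The element \<open>z\<close> is a translation of order \<open>p\<close> in both representations.\<close>
definition z :: 'a where
  "z = g0 [^] (p ^ (e - 1))"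

lemma z_carrier: "z \<in> carrier G"
  unfolding z_def using g0 by simp

lemma A_z: "A1 z = 1" "A2 z = 1"
proof -
  have "int p ^ (1 + (e - 1)) = n" using e_pos modulus_eq by simp
  then have "[A1 g0 ^ p ^ (e - 1) = 1] (mod n)" "[A2 g0 ^ p ^ (e - 1) = 1] (mod n)"
    using power_prime_power_cong_one[OF prime_p odd_p, of _ 1 "e - 1"] g0 by auto
  then show "A1 z = 1" "A2 z = 1" unfolding z_def
    using R1.A_eq_oneI[OF _ cong_trans[OF R1.A_pow[OF g0(1)]]]
      R2.A_eq_oneI[OF _ cong_trans[OF R2.A_pow[OF g0(1)]]] g0(1) by auto
qed

lemma B_z_cong:
  obtains u1 u2 where "[B1 z = int p ^ (e - 1) * (B1 g0 * u1)] (mod n)"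
    "[B2 z = int p ^ (e - 1) * (B2 g0 * u2)] (mod n)" "\<not> int p dvd u1" "\<not> int p dvd u2"
proof -
  obtain u1 where u1: "(\<Sum>i<p ^ (e - 1). A1 g0 ^ i) = int p ^ (e - 1) * u1" "[u1 = 1] (mod int p)"
    using geometric_sum_prime_power[OF prime_p odd_p g0(2)] by blast
  obtain u2 where u2: "(\<Sum>i<p ^ (e - 1). A2 g0 ^ i) = int p ^ (e - 1) * u2" "[u2 = 1] (mod int p)"
    using geometric_sum_prime_power[OF prime_p odd_p g0(3)] by blast
  have "\<not> int p dvd u1" "\<not> int p dvd u2"
    using u1(2) u2(2) cong_one_imp_not_dvd prime_int_p not_prime_unit by blast+
  moreover have "[B1 z = int p ^ (e - 1) * (B1 g0 * u1)] (mod n)"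
    using R1.B_pow[OF g0(1), of "p ^ (e - 1)"] u1(1) unfolding z_def by (simp add: mult_ac)
  moreover have "[B2 z = int p ^ (e - 1) * (B2 g0 * u2)] (mod n)"
    using R2.B_pow[OF g0(1), of "p ^ (e - 1)"] u2(1) unfolding z_def by (simp add: mult_ac)
  ultimately show ?thesis using that by blast
qed

lemma B1_g0_not_dvd: "\<not> int p dvd B1 g0"
proof
  assume "int p dvd B1 g0"
  obtain u1 u2 where u: "[B1 z = int p ^ (e - 1) * (B1 g0 * u1)] (mod n)"
    "[B2 z = int p ^ (e - 1) * (B2 g0 * u2)] (mod n)" "\<not> int p dvd u2"
    by (rule B_z_cong)
  have "int p dvd B1 g0 * u1" using \<open>int p dvd B1 g0\<close> by simp
  then have "n dvd int p ^ (e - 1) * (B1 g0 * u1)" using modulus_dvd_iff by blast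
  then have "B1 z = 0" using u(1) z_carrier R1.B_eq_zeroI by (simp add: cong_0_iff cong_dvd_iff)
  then have "z = \<one>" using R1.faithful z_carrier A_z by blast
  then have "n dvd int p ^ (e - 1) * (B2 g0 * u2)"
    using u(2) R2.B_one by (simp add: cong_0_iff cong_sym_eq[of 0])
  then have "int p dvd B2 g0 * u2" using modulus_dvd_iff by blast
  then show False using g0(4) u(3) prime_int_p by (simp add: prime_dvd_mult_iff)
qed

lemma B_z:
  obtains \<beta>1 \<beta>2 where "[B1 z = int p ^ (e - 1) * \<beta>1] (mod n)" "[B2 z = int p ^ (e - 1) * \<beta>2] (mod n)"
    "\<not> int p dvd \<beta>1" "\<not> int p dvd \<beta>2"
proof -
  obtain u1 u2 where u: "[B1 z = int p ^ (e - 1) * (B1 g0 * u1)] (mod n)"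
    "[B2 z = int p ^ (e - 1) * (B2 g0 * u2)] (mod n)" "\<not> int p dvd u1" "\<not> int p dvd u2"
    by (rule B_z_cong)
  moreover have "\<not> int p dvd B1 g0 * u1" "\<not> int p dvd B2 g0 * u2"
    using B1_g0_not_dvd g0(4) u(3,4) prime_int_p by (simp_all add: prime_dvd_mult_iff)
  ultimately show ?thesis using that by blast
qed

lemma eq_z_pow_if_order_p_translation:
  assumes y: "y \<in> carrier G" "A1 y = 1" "int p ^ (e - 1) dvd B1 y"
  shows "\<exists>m::nat. y = z [^] m"
proof -
  obtain \<beta>1 \<beta>2 where \<beta>1: "[B1 z = int p ^ (e - 1) * \<beta>1] (mod n)" "\<not> int p dvd \<beta>1"
    by (rule B_z)
  obtain s where s: "B1 y = int p ^ (e - 1) * s" using y(3) by (elim dvdE)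
  have "coprime \<beta>1 (int p)"
    using \<beta>1(2) prime_imp_coprime[OF prime_int_p] by (simp add: coprime_commute)
  then obtain m :: nat where m: "[\<beta>1 * int m = s] (mod int p)"
    using exists_nat_cong_solution p_gt_1 by fastforce
  have "[B1 (z [^] m) = int m * B1 z] (mod n)"
    using R1.B_pow_translation[OF z_carrier A_z(1)] .
  also have "[int m * B1 z = int m * (int p ^ (e - 1) * \<beta>1)] (mod n)"
    using \<beta>1(1) by (intro cong_mult cong_refl)
  also have "int m * (int p ^ (e - 1) * \<beta>1) = int p ^ (e - 1) * (\<beta>1 * int m)"
    by (simp add: algebra_simps)
  also have "[\<dots> = int p ^ (e - 1) * s] (mod n)" using m by (rule cong_mult_pow_pred)
  finally have "[B1 (z [^] m) = B1 y] (mod n)" unfolding s .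
  then have "B1 (z [^] m) = B1 y" using y(1) z_carrier R1.B_eq_B_if_cong by simp
  moreover have "A1 (z [^] m) = 1" using R1.A_pow_eq_one[OF z_carrier A_z(1)] .
  ultimately have "z [^] m = y" using R1.eq_if_A_B_eq y(1,2) z_carrier by simp
  then show ?thesis by blast
qed

lemma order_p_translation_trivial:
  assumes y: "y \<in> carrier G" "A1 y = 1" "int p ^ (e - 1) dvd B1 y" "A2 y = 1" "B2 y = 0"
  shows "y = \<one>"
proof -
  obtain m :: nat where m: "y = z [^] m"
    using eq_z_pow_if_order_p_translation[OF y(1-3)] by blast
  obtain \<beta>1 \<beta>2 where \<beta>: "[B1 z = int p ^ (e - 1) * \<beta>1] (mod n)"
    "[B2 z = int p ^ (e - 1) * \<beta>2] (mod n)" "\<not> int p dvd \<beta>2"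
    by (rule B_z)
  have "[0 = int m * B2 z] (mod n)"
    using R2.B_pow_translation[OF z_carrier A_z(2), of m] y(5) m by simp
  also have "[int m * B2 z = int m * (int p ^ (e - 1) * \<beta>2)] (mod n)"
    using \<beta>(2) by (intro cong_mult cong_refl)
  also have "int m * (int p ^ (e - 1) * \<beta>2) = int p ^ (e - 1) * (int m * \<beta>2)"
    by (simp add: algebra_simps)
  finally have "int p dvd int m * \<beta>2"
    using modulus_dvd_iff by (simp add: cong_0_iff cong_sym_eq[of 0])
  then have "int p dvd int m" using \<beta>(3) prime_int_p by (simp add: prime_dvd_mult_iff)
  have "[B1 y = int m * B1 z] (mod n)"
    using R1.B_pow_translation[OF z_carrier A_z(1), of m] m by simp
  also have "[int m * B1 z = int m * (int p ^ (e - 1) * \<beta>1)] (mod n)"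
    using \<beta>(1) by (intro cong_mult cong_refl)
  also have "int m * (int p ^ (e - 1) * \<beta>1) = int p ^ (e - 1) * (int m * \<beta>1)"
    by (simp add: algebra_simps)
  finally have "[B1 y = 0] (mod n)"
    using \<open>int p dvd int m\<close> modulus_dvd_iff by (simp add: cong_0_iff cong_dvd_iff)
  then show ?thesis using R1.faithful R1.B_eq_zeroI y(1,2) by simp
qed

lemma order_p_element_congs:
  assumes q: "q \<in> carrier G" "q [^] p = \<one>" "[A1 q = 1] (mod int p)"
  shows "int p ^ (e - 1) dvd A1 q - 1" "int p ^ (e - 1) dvd B1 q"
proof -
  obtain u where u: "(\<Sum>i<p. A1 q ^ i) = int p * u" "[u = 1] (mod int p)"
    using geometric_sum_prime_power[OF prime_p odd_p q(3), of 1] by auto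
  have cu: "coprime (int p ^ (e - 1)) u"
    using cong_one_imp_coprime[OF u(2)] by (simp add: coprime_commute)
  have "[A1 q ^ p = 1] (mod n)" using R1.A_pow[OF q(1), of p] q(2) R1.A_one by (simp add: cong_sym_eq)
  then have "n dvd int p * ((A1 q - 1) * u)"
    using power_diff_1_eq[of "A1 q" p] u(1) by (simp add: cong_iff_dvd_diff mult_ac)
  then have "int p ^ (e - 1) dvd (A1 q - 1) * u" by (rule dvd_pow_pred_if_modulus_dvd)
  then show "int p ^ (e - 1) dvd A1 q - 1" using cu coprime_dvd_mult_left_iff by blast
  have "[B1 q * (\<Sum>i<p. A1 q ^ i) = 0] (mod n)"
    using R1.B_pow[OF q(1), of p] q(2) R1.B_one by (simp add: cong_sym_eq)
  then have "n dvd int p * (B1 q * u)" using u(1) by (simp add: cong_0_iff mult_ac)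
  then have "int p ^ (e - 1) dvd B1 q * u" by (rule dvd_pow_pred_if_modulus_dvd)
  then show "int p ^ (e - 1) dvd B1 q" using cu coprime_dvd_mult_left_iff by blast
qed

lemma commutator_g0_trivial_in_rep2:
  assumes x: "x \<in> carrier G" "A2 x = 1" "int p ^ (e - 1) dvd B2 x"
  shows "A2 (g0 \<otimes> x \<otimes> inv g0 \<otimes> inv x) = 1" "B2 (g0 \<otimes> x \<otimes> inv g0 \<otimes> inv x) = 0"
proof -
  show "A2 (g0 \<otimes> x \<otimes> inv g0 \<otimes> inv x) = 1" using R2.A_commutator[OF g0(1) x(1)] .
  have "[B2 (g0 \<otimes> x \<otimes> inv g0 \<otimes> inv x) = (A2 g0 - 1) * B2 x] (mod n)"
    using R2.B_commutator[OF g0(1) x(1)] x(2) by simp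
  moreover have "n dvd (A2 g0 - 1) * B2 x" using modulus_dvd_mult[OF g0(3) x(3)] .
  ultimately show "B2 (g0 \<otimes> x \<otimes> inv g0 \<otimes> inv x) = 0"
    using R2.B_zero_if_dvd g0(1) x(1) by (simp add: cong_dvd_iff)
qed

text \<open>Conjugating by \<open>g0\<close> moves the translation part by \<open>(1 - A1 x) * B1 g0\<close> with \<open>B1 g0\<close> a unit.\<close>
lemma A1_eq_one_if_commutator_g0_trivial:
  assumes x: "x \<in> carrier G" "int p ^ (e - 1) dvd B1 x" "g0 \<otimes> x \<otimes> inv g0 \<otimes> inv x = \<one>"
  shows "A1 x = 1"
proof -
  have "[0 = (A1 g0 - 1) * B1 x + (1 - A1 x) * B1 g0] (mod n)"
    using R1.B_commutator[OF g0(1) x(1)] x(3) R1.B_one by simp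
  then have "n dvd (A1 g0 - 1) * B1 x + (1 - A1 x) * B1 g0" by (simp add: cong_0_iff cong_sym_eq[of 0])
  moreover have "n dvd (A1 g0 - 1) * B1 x" using modulus_dvd_mult[OF g0(2) x(2)] .
  ultimately have "n dvd (1 - A1 x) * B1 g0" using dvd_add_right_iff by blast
  moreover have "coprime n (B1 g0)"
    using coprime_modulus_if_not_dvd[OF B1_g0_not_dvd] by (rule coprime_commute[THEN iffD1])
  ultimately have "n dvd 1 - A1 x" using coprime_dvd_mult_left_iff by blast
  then have "[A1 x = 1] (mod n)" unfolding cong_iff_dvd_diff by (rule dvd_diff_commute[THEN iffD1])
  then show ?thesis using R1.A_eq_oneI x(1) by blast
qed

lemma order_p_element_trivial_in_rep2:
  assumes q: "q \<in> carrier G" "q [^] p = \<one>" "[A1 q = 1] (mod int p)" "A2 q = 1" "B2 q = 0"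
  shows "q = \<one>"
proof -
  note order_p = order_p_element_congs[OF q(1-3)]
  define c where "c = g0 \<otimes> q \<otimes> inv g0 \<otimes> inv q"
  have c: "c \<in> carrier G" using g0(1) q(1) by (simp add: c_def)
  have "A2 c = 1" "B2 c = 0" using commutator_g0_trivial_in_rep2[of q] q(1,4,5) by (simp_all add: c_def)
  moreover have "A1 c = 1" unfolding c_def using R1.A_commutator[OF g0(1) q(1)] .
  moreover have "int p ^ (e - 1) dvd B1 c"
  proof (rule dvd_pow_pred_if_cong)
    show "[B1 c = (A1 g0 - 1) * B1 q + (1 - A1 q) * B1 g0] (mod n)"
      unfolding c_def using R1.B_commutator[OF g0(1) q(1)] .
    show "int p ^ (e - 1) dvd (A1 g0 - 1) * B1 q + (1 - A1 q) * B1 g0"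
      using order_p by (simp add: dvd_diff_commute)
  qed
  ultimately have "c = \<one>" using order_p_translation_trivial c by blast
  then have "A1 q = 1" using A1_eq_one_if_commutator_g0_trivial q(1) order_p(2) by (simp add: c_def)
  then show "q = \<one>" using order_p_translation_trivial q(1,4,5) order_p(2) by blast
qed

lemma p_element_trivial_in_rep2:
  assumes q: "q \<in> carrier G" "[A1 q = 1] (mod int p)" "A2 q = 1" "B2 q = 0"
  shows "q = \<one>"
proof (rule ccontr)
  assume "q \<noteq> \<one>"
  then obtain j where j: "q [^] (p ^ j) \<noteq> \<one>" "(q [^] (p ^ j)) [^] p = \<one>"
    using R1.prime_power_order_imp_exists_order_prime[OF q(1) pow_p_power_e_eq_one[OF q(1,2)]] by blast
  have "[A1 (q [^] (p ^ j)) = 1] (mod int p)"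
    using R1.A_pow_cong_one[OF q(1) p_dvd_modulus q(2)] .
  moreover have "A2 (q [^] (p ^ j)) = 1" using R2.A_pow_eq_one[OF q(1,3)] .
  moreover have "B2 (q [^] (p ^ j)) = 0"
    using R2.B_pow_translation[OF q(1,3), of "p ^ j"] q(1,4) R2.B_eq_zeroI by simp
  ultimately show False using order_p_element_trivial_in_rep2 j q(1) by simp
qed

lemma stabilizer0_p_element_trivial:
  assumes x: "x \<in> R1.stabilizer0" "[A1 x = 1] (mod int p)" "A2 x = 1" "int p ^ (e - 1) dvd B2 x"
  shows "x = \<one>"
proof -
  have x1: "x \<in> carrier G" "B1 x = 0" using x(1) R1.stabilizer0_iff by auto
  define c where "c = g0 \<otimes> x \<otimes> inv g0 \<otimes> inv x"
  have c: "c \<in> carrier G" using g0(1) x1(1) by (simp add: c_def)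
  have "A2 c = 1" "B2 c = 0" using commutator_g0_trivial_in_rep2 x1(1) x(3,4) by (simp_all add: c_def)
  moreover have "A1 c = 1" unfolding c_def using R1.A_commutator[OF g0(1) x1(1)] .
  ultimately have "c = \<one>" using p_element_trivial_in_rep2 c by simp
  then have "A1 x = 1" using A1_eq_one_if_commutator_g0_trivial x1 by (simp add: c_def)
  then show ?thesis using R1.faithful x1 by blast
qed

lemma stabilizer0_translation2_trivial_if_dvd:
  assumes w: "w \<in> R1.stabilizer0" "A2 w = 1" "int p ^ (e - 1) dvd B2 w"
  shows "B2 w = 0"
proof -
  have w1: "w \<in> carrier G" using w(1) R1.stabilizer0_iff by auto
  define x where "x = w [^] (p - 1)"
  have "x \<in> R1.stabilizer0" unfolding x_def using w(1) by (rule R1.stabilizer0_pow)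
  moreover have "[A1 x = 1] (mod int p)"
    using cong_trans[OF cong_mod_p[OF R1.A_pow[OF w1]] fermat_theorem_int[OF prime_p A1_not_dvd[OF w1]]]
    unfolding x_def .
  moreover have "A2 x = 1" unfolding x_def using R2.A_pow_eq_one[OF w1 w(2)] .
  moreover have B2x: "[B2 x = int (p - 1) * B2 w] (mod n)"
    unfolding x_def using R2.B_pow_translation[OF w1 w(2)] .
  then have "int p ^ (e - 1) dvd B2 x" by (rule dvd_pow_pred_if_cong) (use w(3) in simp)
  ultimately have "x = \<one>" by (rule stabilizer0_p_element_trivial)
  then have "n dvd int (p - 1) * B2 w" using B2x R2.B_one by (simp add: cong_0_iff cong_sym_eq[of 0])
  moreover have "coprime (int p - 1) (int p)" by simp
  then have "coprime n (int (p - 1))"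
    using modulus_eq p_gt_1 by (simp add: of_nat_diff coprime_commute)
  ultimately have "n dvd B2 w" using coprime_dvd_mult_right_iff by blast
  then show ?thesis using R2.B_zero_if_dvd w1 by blast
qed

text \<open>A \<open>p\<close>-power of a counterexample would be a counterexample with translation part of order
  \<open>p\<close>.\<close>
lemma stabilizer0_translation2_trivial:
  assumes w: "w \<in> R1.stabilizer0" "A2 w = 1"
  shows "B2 w = 0"
proof (rule ccontr)
  assume "B2 w \<noteq> 0"
  have w1: "w \<in> carrier G" using w(1) R1.stabilizer0_iff by auto
  have "\<not> is_unit (int p)" using prime_int_p not_prime_unit by blast
  with \<open>B2 w \<noteq> 0\<close> obtain d where d: "B2 w = int p ^ multiplicity (int p) (B2 w) * d" "\<not> int p dvd d"
    by (rule multiplicity_decompose')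
  define v where "v = multiplicity (int p) (B2 w)"
  have "v < e"
  proof (rule ccontr)
    assume "\<not> v < e"
    then have "n dvd int p ^ v * d" unfolding modulus_eq by (simp add: le_imp_power_dvd dvd_mult2)
    then show False using R2.B_zero_if_dvd w1 d(1) \<open>B2 w \<noteq> 0\<close> unfolding v_def by simp
  qed
  define x where "x = w [^] (p ^ (e - 1 - v))"
  have B2x: "[B2 x = int p ^ (e - 1) * d] (mod n)"
  proof -
    have "int p ^ (e - 1) = int p ^ (e - 1 - v) * int p ^ v" using \<open>v < e\<close>
      by (simp add: power_add[symmetric])
    then show ?thesis
      using R2.B_pow_translation[OF w1 w(2), of "p ^ (e - 1 - v)"] d(1)
      unfolding x_def v_def[symmetric] by (simp add: mult.assoc)
  qed
  have "x \<in> R1.stabilizer0" unfolding x_def using w(1) by (rule R1.stabilizer0_pow)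
  moreover have "A2 x = 1" unfolding x_def using R2.A_pow_eq_one[OF w1 w(2)] .
  moreover have "int p ^ (e - 1) dvd B2 x" using B2x by (rule dvd_pow_pred_if_cong) simp
  ultimately have "B2 x = 0" by (rule stabilizer0_translation2_trivial_if_dvd)
  then have "int p dvd d" using B2x modulus_dvd_iff by (simp add: cong_0_iff cong_sym_eq[of 0])
  then show False using d(2) by blast
qed

lemma stabilizer0_element_has_fixed_point2:
  assumes w: "w \<in> R1.stabilizer0"
  shows "\<exists>y. [A2 w * y + B2 w = y] (mod n)"
  unfolding modulus_eq
proof (rule affine_fixed_point_prime_power[OF prime_p odd_p])
  fix k :: nat assume k: "[A2 w ^ k = 1] (mod int p ^ e)"
  have w1: "w \<in> carrier G" using w R1.stabilizer0_iff by auto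
  have "A2 (w [^] k) = 1"
    using R2.A_eq_oneI[OF _ cong_trans[OF R2.A_pow[OF w1] k[folded modulus_eq]]] w1 by simp
  then have "B2 (w [^] k) = 0"
    using stabilizer0_translation2_trivial R1.stabilizer0_pow[OF w] by blast
  then show "int p ^ e dvd B2 w * (\<Sum>i<k. A2 w ^ i)"
    using R2.B_pow[OF w1, of k] modulus_eq by (simp add: cong_0_iff cong_sym_eq[of 0])
qed

lemma stabilizer0_cyclic: "\<exists>w0\<in>R1.stabilizer0. \<forall>w\<in>R1.stabilizer0. \<exists>k::nat. w = w0 [^] k"
proof -
  obtain r where "\<forall>k>0. residue_primroot (p ^ k) r"
    using residue_primroot_odd_prime_power_exists[OF prime_p odd_p] by blast
  moreover have "nat n = p ^ e" using modulus_eq by (simp add: nat_power_eq)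
  ultimately have r: "residue_primroot (nat n) r" using e_pos by simp
  then have "[r ^ totient (nat n) = 1] (mod nat n)"
    by (intro euler_theorem) (simp add: residue_primroot_def coprime_commute)
  then have "[int (r ^ totient (nat n)) = int 1] (mod int (nat n))" by (rule cong_int_iff[THEN iffD2])
  then have "[int r ^ totient (nat n) = 1] (mod n)" using R1.modulus_gt_1 by simp
  moreover have "0 < totient (nat n)" using R1.modulus_gt_1 by simp
  ultimately show ?thesis
    using R1.stabilizer0_cyclic[of "int r"] R1.A_power_of_primroot[OF r] by blast
qed

lemma stabilizer0_common_fixed_point2:
  "\<exists>y. \<forall>w\<in>R1.stabilizer0. [A2 w * y + B2 w = y] (mod n)"
proof -
  obtain w0 where w0: "w0 \<in> R1.stabilizer0"
    and gen: "\<And>w. w \<in> R1.stabilizer0 \<Longrightarrow> \<exists>k::nat. w = w0 [^] k"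
    using stabilizer0_cyclic by blast
  obtain y where y: "[A2 w0 * y + B2 w0 = y] (mod n)"
    using stabilizer0_element_has_fixed_point2[OF w0] by blast
  have "w0 \<in> carrier G" using w0 R1.stabilizer0_iff by auto
  have "[A2 w * y + B2 w = y] (mod n)" if w: "w \<in> R1.stabilizer0" for w
  proof -
    obtain k :: nat where "w = w0 [^] k" using gen[OF w] by blast
    then show ?thesis using R2.fixed_point_pow[OF \<open>w0 \<in> carrier G\<close> y, of k] by simp
  qed
  then show ?thesis by blast
qed

end

section \<open>Cyclic regular permutation groups\<close>

lemma BijGroup_mult_apply:
  "f \<in> Bij X \<Longrightarrow> g \<in> Bij X \<Longrightarrow> x \<in> X \<Longrightarrow> (f \<otimes>\<^bsub>BijGroup X\<^esub> g) x = f (g x)"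
  by (simp add: BijGroup_def compose_def)

lemma BijGroup_one_apply: "x \<in> X \<Longrightarrow> \<one>\<^bsub>BijGroup X\<^esub> x = x"
  by (simp add: BijGroup_def)

lemma Bij_mem: "f \<in> Bij X \<Longrightarrow> x \<in> X \<Longrightarrow> f x \<in> X"
  using Bij_imp_funcset by blast

lemma Bij_eqI: "f \<in> Bij X \<Longrightarrow> g \<in> Bij X \<Longrightarrow> (\<And>x. x \<in> X \<Longrightarrow> f x = g x) \<Longrightarrow> f = g"
  by (rule extensionalityI[of f X g]) (auto dest: Bij_imp_extensional)

lemma regular_subgroup_eval_inj:
  assumes reg: "regular_subgroup X N" and "\<tau> \<in> N" "\<tau>' \<in> N" "x \<in> X" "\<tau> x = \<tau>' x"
  shows "\<tau> = \<tau>'"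
proof -
  interpret BX: group "BijGroup X" by (rule group_BijGroup)
  have N: "subgroup N (BijGroup X)" using reg by (simp add: regular_subgroup_def)
  have B: "\<tau> \<in> Bij X" "\<tau>' \<in> Bij X" "inv\<^bsub>BijGroup X\<^esub> \<tau>' \<in> Bij X"
    using assms(2,3) subgroup.subset[OF N] BX.inv_closed by (auto simp: BijGroup_def)
  let ?\<rho> = "inv\<^bsub>BijGroup X\<^esub> \<tau>' \<otimes>\<^bsub>BijGroup X\<^esub> \<tau>"
  have "?\<rho> \<in> N" using assms(2,3) N by (simp add: subgroup.m_closed subgroup.m_inv_closed)
  moreover have "?\<rho> x = (inv\<^bsub>BijGroup X\<^esub> \<tau>' \<otimes>\<^bsub>BijGroup X\<^esub> \<tau>') x"
    using B assms(4,5) by (simp add: BijGroup_mult_apply)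
  then have "?\<rho> x = x"
    using B assms(3,4) subgroup.subset[OF N] by (auto simp: BijGroup_one_apply)
  ultimately have "?\<rho> = \<one>\<^bsub>BijGroup X\<^esub>"
    using reg assms(4) unfolding regular_subgroup_def by blast
  moreover have "\<tau> \<in> carrier (BijGroup X)" "\<tau>' \<in> carrier (BijGroup X)"
    using assms(2,3) subgroup.subset[OF N] by auto
  ultimately show ?thesis using BX.inv_solve_left[of "\<one>\<^bsub>BijGroup X\<^esub>" \<tau>' \<tau>] by simp
qed

lemma (in group) conj_nat_pow:
  assumes "x \<in> carrier G" "g \<in> carrier G"
  shows "(g \<otimes> x \<otimes> inv g) [^] (k::nat) = g \<otimes> x [^] k \<otimes> inv g"
proof (induction k)
  case (Suc k)
  have "(g \<otimes> x \<otimes> inv g) [^] Suc k = (g \<otimes> x [^] k \<otimes> inv g) \<otimes> (g \<otimes> x \<otimes> inv g)"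
    using Suc by simp
  also have "\<dots> = g \<otimes> x [^] Suc k \<otimes> inv g"
  proof -
    have "inv g \<otimes> (g \<otimes> y) = y" if "y \<in> carrier G" for y
      using assms that by (simp add: m_assoc[symmetric])
    then show ?thesis using assms by (simp add: m_assoc)
  qed
  finally show ?case .
qed (use assms in simp)

lemma (in group) conj_eq_pow_imp_pow_commute:
  assumes "x \<in> carrier G" "g \<in> carrier G" "g \<otimes> x \<otimes> inv g = x [^] (a::nat)"
  shows "g \<otimes> x [^] (k::nat) = x [^] (a * k) \<otimes> g"
proof -
  have "g \<otimes> x [^] k \<otimes> inv g = x [^] (a * k)"
    using conj_nat_pow[OF assms(1,2), of k] assms by (simp add: nat_pow_pow)
  then show ?thesis using inv_solve_right'[of "x [^] (a * k)" "g \<otimes> x [^] k" g] assms(1,2) by simp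
qed

locale cyclic_regular =
  fixes X :: "'x set" and N :: "('x \<Rightarrow> 'x) set" and \<sigma> :: "'x \<Rightarrow> 'x" and x0 :: 'x
  assumes regular: "regular_subgroup X N"
    and generator: "\<sigma> \<in> N" and generated: "N = generate (BijGroup X) {\<sigma>}"
    and finite_X: "finite X" and base: "x0 \<in> X"
begin

sublocale BX: group "BijGroup X" by (rule group_BijGroup)

lemma subgroup_N: "subgroup N (BijGroup X)"
  using regular by (simp add: regular_subgroup_def)

lemma N_carrier: "\<tau> \<in> N \<Longrightarrow> \<tau> \<in> carrier (BijGroup X)"
  using subgroup.subset[OF subgroup_N] by blast

lemma N_Bij: "\<tau> \<in> N \<Longrightarrow> \<tau> \<in> Bij X"
  using N_carrier by (simp add: BijGroup_def)

lemma sigma_carrier: "\<sigma> \<in> carrier (BijGroup X)"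
  using N_carrier generator by blast

lemma card_N: "card N = card X"
proof -
  have "bij_betw (\<lambda>\<tau>. \<tau> x0) N X"
  proof (rule bij_betwI')
    show "\<tau> x0 = \<tau>' x0 \<longleftrightarrow> \<tau> = \<tau>'" if "\<tau> \<in> N" "\<tau>' \<in> N" for \<tau> \<tau>'
      using regular_subgroup_eval_inj[OF regular that base] by blast
    show "\<tau> x0 \<in> X" if "\<tau> \<in> N" for \<tau> using Bij_mem[OF N_Bij[OF that] base] .
    show "\<exists>\<tau>\<in>N. y = \<tau> x0" if y: "y \<in> X" for y
    proof -
      obtain \<tau> where "\<tau> \<in> N" "\<tau> x0 = y"
        using regular y base unfolding regular_subgroup_def by blast
      then show ?thesis by blast
    qed
  qed
  then show ?thesis by (rule bij_betw_same_card)
qed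

lemma ord_sigma: "BX.ord \<sigma> = card X"
  using BX.generate_pow_card[OF sigma_carrier] generated card_N by simp

lemma card_X_pos: "card X > 0"
  using base finite_X card_gt_0_iff by blast

lemma N_powers: "N = {\<sigma> [^]\<^bsub>BijGroup X\<^esub> k | k. k \<in> (UNIV :: nat set)}"
  using BX.generate_pow_nat[OF sigma_carrier] ord_sigma card_X_pos generated by simp

lemma sigma_pow_mod: "\<sigma> [^]\<^bsub>BijGroup X\<^esub> k = \<sigma> [^]\<^bsub>BijGroup X\<^esub> (k mod card X)"
proof -
  have "\<sigma> [^]\<^bsub>BijGroup X\<^esub> (card X * (k div card X)) = \<one>\<^bsub>BijGroup X\<^esub>"
    using BX.pow_eq_id[OF sigma_carrier] ord_sigma by simp
  then show ?thesis
    using BX.nat_pow_mult[OF sigma_carrier, of "card X * (k div card X)" "k mod card X"]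
      sigma_carrier by simp
qed

lemma sigma_pow_N: "\<sigma> [^]\<^bsub>BijGroup X\<^esub> (k::nat) \<in> N"
  using N_powers by blast

definition orbit :: "nat \<Rightarrow> 'x" where
  "orbit k = (\<sigma> [^]\<^bsub>BijGroup X\<^esub> k) x0"

lemma orbit_mod: "orbit (k mod card X) = orbit k"
  unfolding orbit_def using sigma_pow_mod[of k] by simp

lemma orbit_bij: "bij_betw orbit {..<card X} X"
proof (rule bij_betwI')
  fix i j assume ij: "i \<in> {..<card X}" "j \<in> {..<card X}"
  show "orbit i = orbit j \<longleftrightarrow> i = j"
  proof
    assume "orbit i = orbit j"
    then have "\<sigma> [^]\<^bsub>BijGroup X\<^esub> i = \<sigma> [^]\<^bsub>BijGroup X\<^esub> j"
      using regular_subgroup_eval_inj[OF regular sigma_pow_N sigma_pow_N base] unfolding orbit_def by blast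
    then show "i = j"
      using inj_onD[OF BX.ord_inj[OF sigma_carrier]] ij ord_sigma by fastforce
  qed simp
next
  show "orbit k \<in> X" for k unfolding orbit_def using Bij_mem[OF N_Bij[OF sigma_pow_N] base] .
next
  fix y assume "y \<in> X"
  then obtain \<tau> where "\<tau> \<in> N" "\<tau> x0 = y" using regular base unfolding regular_subgroup_def by blast
  then obtain k where "y = orbit k" using N_powers unfolding orbit_def by blast
  then show "\<exists>k\<in>{..<card X}. y = orbit k"
    using orbit_mod card_X_pos by (metis lessThan_iff mod_less_divisor)
qed

definition coord :: "'x \<Rightarrow> int" where
  "coord y = int (inv_into {..<card X} orbit y)"

lemma coord_orbit: "coord (orbit k) = int (k mod card X)"
proof -
  have "k mod card X \<in> {..<card X}" using card_X_pos by simp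
  then have "coord (orbit (k mod card X)) = int (k mod card X)"
    unfolding coord_def using bij_betw_inv_into_left[OF orbit_bij] by simp
  then show ?thesis by (simp only: orbit_mod)
qed

lemma orbit_coord: "y \<in> X \<Longrightarrow> orbit (nat (coord y)) = y"
  unfolding coord_def using bij_betw_inv_into_right[OF orbit_bij] by simp

lemma coord_bij: "bij_betw coord X {0..<int (card X)}"
proof -
  have "bij_betw int {..<card X} {0..<int (card X)}"
    by (rule bij_betwI[where g = nat]) auto
  then have "bij_betw (int \<circ> inv_into {..<card X} orbit) X {0..<int (card X)}"
    using bij_betw_inv_into[OF orbit_bij] by (rule bij_betw_trans[rotated])
  moreover have "coord = int \<circ> inv_into {..<card X} orbit" by (simp add: coord_def fun_eq_iff)
  ultimately show ?thesis by simp
qed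

lemma coord_base: "coord x0 = 0"
  using coord_orbit[of 0] by (simp add: orbit_def BijGroup_one_apply base)

text \<open>A permutation normalising \<open>\<langle>\<sigma>\<rangle>\<close> conjugates \<open>\<sigma>\<close> to some \<open>\<sigma>\<^sup>a\<close>, and therefore maps \<open>\<sigma>\<^sup>k x0\<close>
  to \<open>\<sigma>\<^sup>a\<^sup>k (L x0)\<close>: in coordinates it is affine.\<close>
lemma normalizer_affine:
  assumes L: "L \<in> carrier (BijGroup X)"
    and normal: "L \<otimes>\<^bsub>BijGroup X\<^esub> \<sigma> \<otimes>\<^bsub>BijGroup X\<^esub> inv\<^bsub>BijGroup X\<^esub> L \<in> N"
  shows "\<exists>a. \<forall>y\<in>X. coord (L y) = (int a * coord y + coord (L x0)) mod int (card X)"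
proof -
  let ?pow = "\<lambda>k::nat. \<sigma> [^]\<^bsub>BijGroup X\<^esub> k"
  obtain a where a: "L \<otimes>\<^bsub>BijGroup X\<^esub> \<sigma> \<otimes>\<^bsub>BijGroup X\<^esub> inv\<^bsub>BijGroup X\<^esub> L = ?pow a"
    using normal N_powers by blast
  note commute = BX.conj_eq_pow_imp_pow_commute[OF sigma_carrier L a]
  have "coord (L y) = (int a * coord y + coord (L x0)) mod int (card X)" if y: "y \<in> X" for y
  proof -
    define k where "k = nat (coord y)"
    define b where "b = nat (coord (L x0))"
    have LB: "L \<in> Bij X" using L by (simp add: BijGroup_def)
    have Lx0: "L x0 = orbit b" unfolding b_def using orbit_coord Bij_mem[OF LB base] by simp
    have "L y = L (?pow k x0)" using orbit_coord[OF y] unfolding k_def orbit_def by simp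
    also have "\<dots> = (?pow (a * k) \<otimes>\<^bsub>BijGroup X\<^esub> L) x0"
      using commute[of k] BijGroup_mult_apply[OF LB N_Bij[OF sigma_pow_N[of k]] base] by simp
    also have "\<dots> = ?pow (a * k) (?pow b x0)"
      using BijGroup_mult_apply[OF N_Bij[OF sigma_pow_N[of "a * k"]] LB base] Lx0
      unfolding orbit_def by simp
    also have "\<dots> = orbit (a * k + b)"
      using BijGroup_mult_apply[OF N_Bij[OF sigma_pow_N[of "a * k"]] N_Bij[OF sigma_pow_N[of b]] base]
      unfolding orbit_def by (simp add: BX.nat_pow_mult[OF sigma_carrier])
    finally have "coord (L y) = int ((a * k + b) mod card X)" by (simp add: coord_orbit)
    moreover have "coord y = int k" "coord (L x0) = int b"
      unfolding k_def b_def using coord_bij y Bij_mem[OF LB base] by (auto simp: bij_betw_def)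
    ultimately show ?thesis by (simp add: of_nat_mod)
  qed
  then show ?thesis by blast
qed

end

section \<open>Affine coordinates on coset spaces\<close>

context group
begin

lemma lcos_in_lcosets:
  assumes "subgroup K G" "g \<in> carrier G" "C \<in> lcosets K"
  shows "g <# C \<in> lcosets K"
proof -
  obtain a where a: "a \<in> carrier G" "C = a <# K" using assms(3) unfolding LCOSETS_def by blast
  then have "g <# C = (g \<otimes> a) <# K"
    using lcos_m_assoc[OF subgroup.subset[OF assms(1)] assms(2) a(1)] by simp
  then show ?thesis unfolding LCOSETS_def using a assms(2) by blast
qed

lemma subgroup_in_lcosets: "subgroup K G \<Longrightarrow> K \<in> lcosets K"
  unfolding LCOSETS_def using lcos_mult_one[OF subgroup.subset] by force

lemma lcosets_subset: "subgroup K G \<Longrightarrow> C \<in> lcosets K \<Longrightarrow> C \<subseteq> carrier G"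
  using subgroup.lcosets_carrier[OF _ is_group] by blast

lemma lam_apply: "C \<in> lcosets K \<Longrightarrow> lam G K g C = g <# C"
  by (simp add: lam_def)

lemma lam_carrier:
  assumes K: "subgroup K G" and g: "g \<in> carrier G"
  shows "lam G K g \<in> carrier (BijGroup (lcosets K))"
proof -
  have inverse: "lam G K (inv h) (lam G K h C) = C" if h: "h \<in> carrier G" and C: "C \<in> lcosets K" for h C
  proof -
    have "C \<subseteq> carrier G" using lcosets_subset[OF K C] .
    then show ?thesis using lcos_m_assoc[of C "inv h" h] lcos_mult_one lcos_in_lcosets[OF K h C] h C
      by (simp add: lam_apply)
  qed
  have "bij_betw (lam G K g) (lcosets K) (lcosets K)"
  proof (rule bij_betw_byWitness[where f' = "lam G K (inv g)"])
    show "\<forall>C\<in>lcosets K. lam G K (inv g) (lam G K g C) = C" using inverse g by blast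
    show "\<forall>C\<in>lcosets K. lam G K g (lam G K (inv g) C) = C"
      using inverse[of "inv g"] g by simp
    show "lam G K g ` (lcosets K) \<subseteq> lcosets K" "lam G K (inv g) ` (lcosets K) \<subseteq> lcosets K"
      using lcos_in_lcosets[OF K] g by (auto simp: lam_apply)
  qed
  then show ?thesis by (simp add: BijGroup_def Bij_def lam_def)
qed

lemma conj_mem_iff: "y \<in> x <# S #> z \<longleftrightarrow> (\<exists>s\<in>S. y = x \<otimes> s \<otimes> z)"
  unfolding l_coset_def r_coset_def by blast

lemma lcos_fixed_iff_conj:
  assumes K: "subgroup K G" and g: "g \<in> carrier G" and w: "w \<in> carrier G"
  shows "w <# (g <# K) = g <# K \<longleftrightarrow> w \<in> g <# K #> inv g"
proof -
  have wg: "w <# (g <# K) = (w \<otimes> g) <# K"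
    using K g w by (simp add: lcos_m_assoc subgroup.subset)
  have "w \<otimes> g \<in> g <# K \<longleftrightarrow> w \<in> g <# K #> inv g"
  proof
    assume "w \<otimes> g \<in> g <# K"
    then obtain k where k: "k \<in> K" "w \<otimes> g = g \<otimes> k" unfolding l_coset_def by blast
    then have "w = g \<otimes> k \<otimes> inv g"
      using K g w by (metis inv_solve_right subgroup.mem_carrier m_closed)
    then show "w \<in> g <# K #> inv g" using k(1) conj_mem_iff by blast
  next
    assume "w \<in> g <# K #> inv g"
    then obtain k where k: "k \<in> K" "w = g \<otimes> k \<otimes> inv g" using conj_mem_iff by blast
    then have "w \<otimes> g = g \<otimes> k" using K g by (simp add: m_assoc subgroup.mem_carrier)
    then show "w \<otimes> g \<in> g <# K" using k(1) unfolding l_coset_def by blast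
  qed
  moreover have "(w \<otimes> g) <# K = g <# K \<longleftrightarrow> w \<otimes> g \<in> g <# K"
    using l_repr_independence[of "w \<otimes> g" g K] lcos_self[of "w \<otimes> g" K] K g w by auto
  ultimately show ?thesis using wg by simp
qed

lemma lcos_eq_self_iff:
  assumes K: "subgroup K G" and w: "w \<in> carrier G"
  shows "w <# K = K \<longleftrightarrow> w \<in> K"
proof -
  have "\<one> <# K = K" "\<one> <# K #> inv \<one> = K"
    using subgroup.subset[OF K] by (simp_all add: lcos_mult_one coset_mult_one)
  then show ?thesis using lcos_fixed_iff_conj[OF K one_closed w] by simp
qed

end

locale coset_coordinates = group G for G (structure) +
  fixes K :: "'a set" and n :: int and \<kappa> :: "'a set \<Rightarrow> int" and A :: "'a \<Rightarrow> int"
  assumes subgroup_K: "subgroup K G"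
    and coord_modulus_gt_1: "n > 1"
    and coord_bij: "bij_betw \<kappa> (lcosets K) {0..<n}"
    and coord_K: "\<kappa> K = 0"
    and A_in_range: "g \<in> carrier G \<Longrightarrow> A g \<in> {0..<n}"
    and coord_lcos: "g \<in> carrier G \<Longrightarrow> C \<in> lcosets K \<Longrightarrow> \<kappa> (g <# C) = (A g * \<kappa> C + \<kappa> (g <# K)) mod n"
begin

lemma K_in_lcosets: "K \<in> lcosets K"
  using subgroup_in_lcosets[OF subgroup_K] .

lemma lcos_K_in_lcosets: "g \<in> carrier G \<Longrightarrow> g <# K \<in> lcosets K"
  using lcos_in_lcosets[OF subgroup_K _ K_in_lcosets] .

lemma coord_range: "C \<in> lcosets K \<Longrightarrow> \<kappa> C \<in> {0..<n}"
  using coord_bij by (auto simp: bij_betw_def)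

lemma coord_eq_iff: "C \<in> lcosets K \<Longrightarrow> D \<in> lcosets K \<Longrightarrow> \<kappa> C = \<kappa> D \<longleftrightarrow> C = D"
  using coord_bij by (auto simp: bij_betw_def inj_on_def)

lemma lcos_assoc: "g \<in> carrier G \<Longrightarrow> h \<in> carrier G \<Longrightarrow> C \<in> lcosets K \<Longrightarrow> (g \<otimes> h) <# C = g <# (h <# C)"
  using lcos_m_assoc[OF lcosets_subset[OF subgroup_K]] by simp

sublocale affine_rep G n A "\<lambda>g. \<kappa> (g <# K)"
proof (unfold_locales)
  let ?B = "\<lambda>g. \<kappa> (g <# K)"
  have "1 \<in> \<kappa> ` (lcosets K)" using coord_bij coord_modulus_gt_1 by (simp add: bij_betw_def)
  then obtain C1 where C1: "C1 \<in> lcosets K" "\<kappa> C1 = 1" by auto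
  have C1_carrier: "C1 \<subseteq> carrier G" using lcosets_subset[OF subgroup_K C1(1)] .
  have coord_C1: "\<kappa> (g <# C1) = (A g + ?B g) mod n" if "g \<in> carrier G" for g
    using coord_lcos[OF that C1(1)] C1(2) by simp
  show B_one: "?B \<one> = 0" using lcos_mult_one[OF subgroup.subset[OF subgroup_K]] coord_K by simp
  show "n > 1" by (rule coord_modulus_gt_1)
  show "A g \<in> {0..<n}" if "g \<in> carrier G" for g using A_in_range[OF that] .
  show "?B g \<in> {0..<n}" if "g \<in> carrier G" for g using coord_range[OF lcos_K_in_lcosets[OF that]] .
  show B_mult: "[?B (g \<otimes> h) = A g * ?B h + ?B g] (mod n)"
    if g: "g \<in> carrier G" and h: "h \<in> carrier G" for g h
    using coord_lcos[OF g lcos_K_in_lcosets[OF h]] lcos_assoc[OF g h K_in_lcosets]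
    by (simp add: cong_def)
  show "[A (g \<otimes> h) = A g * A h] (mod n)" if g: "g \<in> carrier G" and h: "h \<in> carrier G" for g h
  proof -
    have "[A (g \<otimes> h) + ?B (g \<otimes> h) = A g * (A h + ?B h) + ?B g] (mod n)"
    proof -
      have "(A (g \<otimes> h) + ?B (g \<otimes> h)) mod n = \<kappa> (g <# (h <# C1))"
        using coord_C1[of "g \<otimes> h"] lcos_assoc[OF g h C1(1)] g h by simp
      also have "\<dots> = (A g * ((A h + ?B h) mod n) + ?B g) mod n"
        using coord_lcos[OF g lcos_in_lcosets[OF subgroup_K h C1(1)]] coord_C1[OF h] by simp
      also have "\<dots> = (A g * (A h + ?B h) + ?B g) mod n"
        by (metis mod_add_left_eq mod_mult_right_eq)
      finally show ?thesis by (simp add: cong_def)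
    qed
    from cong_diff[OF this B_mult[OF g h]] show ?thesis by (simp add: algebra_simps)
  qed
  show "A \<one> = 1"
  proof -
    have "(A \<one> + ?B \<one>) mod n = 1" using coord_C1[of \<one>] lcos_mult_one[OF C1_carrier] C1(2) by simp
    then show ?thesis using A_in_range[of \<one>] B_one by simp
  qed
qed

lemma stabilizer0_eq: "stabilizer0 = K"
proof -
  have "w \<in> stabilizer0 \<longleftrightarrow> w \<in> K" if w: "w \<in> carrier G" for w
    using coord_eq_iff[OF lcos_K_in_lcosets[OF w] K_in_lcosets] coord_K
      lcos_eq_self_iff[OF subgroup_K w] w by (simp add: stabilizer0_iff)
  then show ?thesis using subgroup.subset[OF subgroup_K] stabilizer0_iff by blast
qed

lemma lcos_fixed_iff_cong:
  assumes "g \<in> carrier G" "C \<in> lcosets K"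
  shows "g <# C = C \<longleftrightarrow> [A g * \<kappa> C + \<kappa> (g <# K) = \<kappa> C] (mod n)"
  using coord_eq_iff[OF lcos_in_lcosets[OF subgroup_K assms] assms(2)] coord_lcos[OF assms]
    coord_range[OF assms(2)] by (simp add: cong_def)

end


lemma (in group) coset_coordinates_of_HGS_cyclic:
  assumes K: "subgroup K G" and hgs: "HGS_cyclic G K" and card: "card (lcosets K) > 1"
  shows "\<exists>\<kappa> A. coset_coordinates G K (int (card (lcosets K))) \<kappa> A"
proof -
  let ?X = "lcosets K" and ?m = "int (card (lcosets K))"
  obtain N \<sigma> where reg: "regular_subgroup ?X N" "\<sigma> \<in> N" "N = generate (BijGroup ?X) {\<sigma>}"
    and normal: "\<And>g \<eta>. g \<in> carrier G \<Longrightarrow> \<eta> \<in> N \<Longrightarrow>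
      lam G K g \<otimes>\<^bsub>BijGroup ?X\<^esub> \<eta> \<otimes>\<^bsub>BijGroup ?X\<^esub> inv\<^bsub>BijGroup ?X\<^esub> lam G K g \<in> N"
    using hgs unfolding HGS_cyclic_def cyclic_subgroup_def by blast
  interpret cyclic_regular ?X N \<sigma> K
    using reg card subgroup_in_lcosets[OF K] by unfold_locales (auto intro: card_ge_0_finite)
  have "\<forall>g\<in>carrier G. \<exists>a. \<forall>C\<in>?X. coord (g <# C) = (int a * coord C + coord (g <# K)) mod ?m"
    using normalizer_affine[OF lam_carrier[OF K] normal[OF _ generator]] subgroup_in_lcosets[OF K]
    by (simp add: lam_apply)
  then obtain a where a: "\<And>g C. g \<in> carrier G \<Longrightarrow> C \<in> ?X \<Longrightarrow>
      coord (g <# C) = (int (a g) * coord C + coord (g <# K)) mod ?m"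
    by metis
  have "coset_coordinates G K ?m coord (\<lambda>g. int (a g) mod ?m)"
  proof (intro coset_coordinates.intro coset_coordinates_axioms.intro)
    show "group G" by (rule is_group)
    show "subgroup K G" by (rule K)
    show "?m > 1" using card by simp
    show "bij_betw coord ?X {0..<?m}" by (rule coord_bij)
    show "coord K = 0" by (rule coord_base)
    show "int (a g) mod ?m \<in> {0..<?m}" for g using card by simp
    show "coord (g <# C) = (int (a g) mod ?m * coord C + coord (g <# K)) mod ?m"
      if "g \<in> carrier G" "C \<in> ?X" for g C
      using a[OF that] by (metis mod_add_left_eq mod_mult_left_eq)
  qed
  then show ?thesis by blast
qed

section \<open>Transport of cyclic Hopf--Galois structures\<close>

definition transport_perm :: "('x \<Rightarrow> 'y) \<Rightarrow> 'x set \<Rightarrow> 'y set \<Rightarrow> ('x \<Rightarrow> 'x) \<Rightarrow> 'y \<Rightarrow> 'y" where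
  "transport_perm \<phi> X Y \<eta> = (\<lambda>y\<in>Y. \<phi> (\<eta> (inv_into X \<phi> y)))"

context
  fixes \<phi> :: "'x \<Rightarrow> 'y" and X :: "'x set" and Y :: "'y set"
  assumes \<phi>: "bij_betw \<phi> X Y"
begin

lemma transport_perm_apply: "x \<in> X \<Longrightarrow> transport_perm \<phi> X Y \<eta> (\<phi> x) = \<phi> (\<eta> x)"
  using \<phi> by (simp add: transport_perm_def bij_betw_inv_into_left bij_betw_apply)

lemma transport_perm_Bij: "\<eta> \<in> Bij X \<Longrightarrow> transport_perm \<phi> X Y \<eta> \<in> Bij Y"
proof -
  assume "\<eta> \<in> Bij X"
  then have "bij_betw (\<phi> \<circ> \<eta> \<circ> inv_into X \<phi>) Y Y"
    using \<phi> bij_betw_inv_into by (auto simp: Bij_def intro: bij_betw_trans)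
  then have "bij_betw (transport_perm \<phi> X Y \<eta>) Y Y"
    unfolding transport_perm_def by (rule bij_betw_cong[THEN iffD1, rotated]) auto
  then show ?thesis by (simp add: Bij_def transport_perm_def)
qed

lemma transport_perm_surj: "y \<in> Y \<Longrightarrow> \<exists>x\<in>X. y = \<phi> x"
  using \<phi> by (auto simp: bij_betw_def)

lemma transport_perm_hom: "transport_perm \<phi> X Y \<in> hom (BijGroup X) (BijGroup Y)"
proof (rule homI)
  interpret BX: group "BijGroup X" by (rule group_BijGroup)
  interpret BY: group "BijGroup Y" by (rule group_BijGroup)
  show "transport_perm \<phi> X Y \<eta> \<in> carrier (BijGroup Y)" if "\<eta> \<in> carrier (BijGroup X)" for \<eta>
    using transport_perm_Bij that by (simp add: BijGroup_def)
  show "transport_perm \<phi> X Y (\<eta> \<otimes>\<^bsub>BijGroup X\<^esub> \<eta>')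
      = transport_perm \<phi> X Y \<eta> \<otimes>\<^bsub>BijGroup Y\<^esub> transport_perm \<phi> X Y \<eta>'"
    if "\<eta> \<in> carrier (BijGroup X)" "\<eta>' \<in> carrier (BijGroup X)" for \<eta> \<eta>'
  proof -
    have B: "\<eta> \<in> Bij X" "\<eta>' \<in> Bij X" using that by (simp_all add: BijGroup_def)
    have "\<eta> \<otimes>\<^bsub>BijGroup X\<^esub> \<eta>' \<in> Bij X"
      using BX.m_closed[OF that] by (simp add: BijGroup_def)
    moreover have "transport_perm \<phi> X Y \<eta> \<otimes>\<^bsub>BijGroup Y\<^esub> transport_perm \<phi> X Y \<eta>' \<in> Bij Y"
      using BY.m_closed transport_perm_Bij B by (simp add: BijGroup_def)
    moreover have "transport_perm \<phi> X Y (\<eta> \<otimes>\<^bsub>BijGroup X\<^esub> \<eta>') (\<phi> x)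
        = (transport_perm \<phi> X Y \<eta> \<otimes>\<^bsub>BijGroup Y\<^esub> transport_perm \<phi> X Y \<eta>') (\<phi> x)" if "x \<in> X" for x
      using that B Bij_mem[OF B(2)] \<phi> transport_perm_Bij
      by (simp add: transport_perm_apply BijGroup_mult_apply bij_betw_apply)
    ultimately show ?thesis using transport_perm_Bij by (metis Bij_eqI transport_perm_surj)
  qed
qed

lemma regular_subgroup_transport:
  assumes reg: "regular_subgroup X N"
  shows "regular_subgroup Y (transport_perm \<phi> X Y ` N)"
proof -
  interpret hom: group_hom "BijGroup X" "BijGroup Y" "transport_perm \<phi> X Y"
    by (intro group_hom.intro group_hom_axioms.intro group_BijGroup transport_perm_hom)
  have N: "subgroup N (BijGroup X)" using reg by (simp add: regular_subgroup_def)
  have NB: "\<eta> \<in> Bij X" if "\<eta> \<in> N" for \<eta> using subgroup.subset[OF N] that by (auto simp: BijGroup_def)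
  show ?thesis unfolding regular_subgroup_def
  proof (intro conjI ballI impI)
    show "subgroup (transport_perm \<phi> X Y ` N) (BijGroup Y)" by (rule hom.subgroup_img_is_subgroup[OF N])
  next
    fix y y' assume "y \<in> Y" "y' \<in> Y"
    then obtain x x' where x: "x \<in> X" "y = \<phi> x" and x': "x' \<in> X" "y' = \<phi> x'"
      using transport_perm_surj by blast
    then obtain \<eta> where "\<eta> \<in> N" "\<eta> x = x'" using reg unfolding regular_subgroup_def by blast
    then show "\<exists>\<tau>\<in>transport_perm \<phi> X Y ` N. \<tau> y = y'" using x x' transport_perm_apply by blast
  next
    fix \<tau> y assume \<tau>: "\<tau> \<in> transport_perm \<phi> X Y ` N" and "y \<in> Y" and fix_y: "\<tau> y = y"
    then obtain \<eta> x where \<eta>: "\<eta> \<in> N" "\<tau> = transport_perm \<phi> X Y \<eta>" and x: "x \<in> X" "y = \<phi> x"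
      using transport_perm_surj by blast
    then have "\<phi> (\<eta> x) = \<phi> x" using fix_y transport_perm_apply by simp
    then have "\<eta> x = x" using \<phi> x(1) Bij_mem[OF NB[OF \<eta>(1)] x(1)] by (auto simp: bij_betw_def inj_on_def)
    then have "\<eta> = \<one>\<^bsub>BijGroup X\<^esub>" using reg \<eta>(1) x(1) unfolding regular_subgroup_def by blast
    then show "\<tau> = \<one>\<^bsub>BijGroup Y\<^esub>" using \<eta>(2) hom.hom_one by simp
  qed
qed

end


lemma (in group) HGS_cyclic_transport:
  assumes K: "subgroup K G" and K': "subgroup K' G"
    and \<phi>: "bij_betw \<phi> (lcosets K) (lcosets K')"
    and equivariant: "\<And>h C. h \<in> carrier G \<Longrightarrow> C \<in> lcosets K \<Longrightarrow> \<phi> (h <# C) = h <# \<phi> C"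
    and hgs: "HGS_cyclic G K"
  shows "HGS_cyclic G K'"
proof -
  let ?X = "lcosets K" and ?Y = "lcosets K'" and ?T = "transport_perm \<phi> (lcosets K) (lcosets K')"
  interpret hom: group_hom "BijGroup ?X" "BijGroup ?Y" ?T
    by (intro group_hom.intro group_hom_axioms.intro group_BijGroup transport_perm_hom[OF \<phi>])
  obtain N \<sigma> where reg: "regular_subgroup ?X N" and \<sigma>: "\<sigma> \<in> N" "N = generate (BijGroup ?X) {\<sigma>}"
    and normal: "\<And>g \<eta>. g \<in> carrier G \<Longrightarrow> \<eta> \<in> N \<Longrightarrow>
      lam G K g \<otimes>\<^bsub>BijGroup ?X\<^esub> \<eta> \<otimes>\<^bsub>BijGroup ?X\<^esub> inv\<^bsub>BijGroup ?X\<^esub> lam G K g \<in> N"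
    using hgs unfolding HGS_cyclic_def cyclic_subgroup_def by blast
  have N: "N \<subseteq> carrier (BijGroup ?X)" using reg subgroup.subset by (auto simp: regular_subgroup_def)
  have T_lam: "?T (lam G K g) = lam G K' g" if g: "g \<in> carrier G" for g
  proof (rule Bij_eqI)
    show "?T (lam G K g) \<in> Bij ?Y" "lam G K' g \<in> Bij ?Y"
      using transport_perm_Bij[OF \<phi>] lam_carrier[OF K g] lam_carrier[OF K' g] by (simp_all add: BijGroup_def)
    fix D assume "D \<in> ?Y"
    then obtain C where C: "C \<in> ?X" "D = \<phi> C" using \<phi> by (auto simp: bij_betw_def)
    then show "?T (lam G K g) D = lam G K' g D"
      using transport_perm_apply[OF \<phi>] equivariant[OF g C(1)] lcos_in_lcosets[OF K g]
        bij_betw_apply[OF \<phi>] by (simp add: lam_apply)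
  qed
  have "regular_subgroup ?Y (?T ` N)" using regular_subgroup_transport[OF \<phi> reg] .
  moreover have "?T ` N = generate (BijGroup ?Y) {?T \<sigma>}"
    using hom.generate_img[of "{\<sigma>}"] \<sigma> N by auto
  then have "cyclic_subgroup (BijGroup ?Y) (?T ` N)"
    unfolding cyclic_subgroup_def using \<sigma>(1) by blast
  moreover have "lam G K' g \<otimes>\<^bsub>BijGroup ?Y\<^esub> \<tau> \<otimes>\<^bsub>BijGroup ?Y\<^esub> inv\<^bsub>BijGroup ?Y\<^esub> lam G K' g \<in> ?T ` N"
    if g: "g \<in> carrier G" and \<tau>: "\<tau> \<in> ?T ` N" for g \<tau>
  proof -
    obtain \<eta> where \<eta>: "\<eta> \<in> N" "\<tau> = ?T \<eta>" using \<tau> by blast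
    have "?T (lam G K g \<otimes>\<^bsub>BijGroup ?X\<^esub> \<eta> \<otimes>\<^bsub>BijGroup ?X\<^esub> inv\<^bsub>BijGroup ?X\<^esub> lam G K g)
        = lam G K' g \<otimes>\<^bsub>BijGroup ?Y\<^esub> \<tau> \<otimes>\<^bsub>BijGroup ?Y\<^esub> inv\<^bsub>BijGroup ?Y\<^esub> lam G K' g"
      using lam_carrier[OF K g] \<eta> N T_lam[OF g] by auto
    then show ?thesis using normal[OF g \<eta>(1)] by (metis imageI)
  qed
  ultimately show ?thesis unfolding HGS_cyclic_def by blast
qed

lemma (in group) HGS_cyclic_conj:
  assumes K: "subgroup K G" and g: "g \<in> carrier G" and hgs: "HGS_cyclic G K"
  shows "HGS_cyclic G (g <# K #> inv g)"
proof -
  let ?K' = "g <# K #> inv g"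
  have KG: "K \<subseteq> carrier G" using subgroup.subset[OF K] .
  have K': "subgroup ?K' G" using subgroup_conjugation_is_surj2[OF g K] .
  have coset: "(a <# K) #> inv g = (a \<otimes> inv g) <# ?K'" if a: "a \<in> carrier G" for a
  proof -
    have "(a \<otimes> inv g) <# ?K' = ((a \<otimes> inv g) <# (g <# K)) #> inv g"
      using coset_assoc[OF _ inv_closed[OF g] l_coset_subset_G[OF KG g]] a g by simp
    also have "(a \<otimes> inv g) <# (g <# K) = (a \<otimes> inv g \<otimes> g) <# K"
      using lcos_m_assoc[OF KG _ g] a g by simp
    also have "a \<otimes> inv g \<otimes> g = a" using a g by (simp add: m_assoc)
    finally show ?thesis by simp
  qed
  have cancel: "C #> h #> inv h = C" if "C \<subseteq> carrier G" "h \<in> carrier G" for C h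
    using coset_mult_assoc[OF that inv_closed[OF that(2)]] coset_mult_one[OF that(1)] that(2) by simp
  have \<phi>: "bij_betw (\<lambda>C. C #> inv g) (lcosets K) (lcosets ?K')"
  proof (rule bij_betw_byWitness[where f' = "\<lambda>D. D #> g"])
    show "\<forall>C\<in>lcosets K. C #> inv g #> g = C"
      using cancel[OF lcosets_subset[OF K] inv_closed[OF g]] g by (simp add: inv_inv)
    show "\<forall>D\<in>lcosets ?K'. D #> g #> inv g = D"
      using cancel[OF lcosets_subset[OF K'] g] by simp
    show "(\<lambda>C. C #> inv g) ` (lcosets K) \<subseteq> lcosets ?K'"
    proof
      fix D assume "D \<in> (\<lambda>C. C #> inv g) ` (lcosets K)"
      then obtain a where a: "a \<in> carrier G" "D = (a <# K) #> inv g" unfolding LCOSETS_def by blast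
      then have "D = (a \<otimes> inv g) <# ?K'" using coset[OF a(1)] by simp
      moreover have "a \<otimes> inv g \<in> carrier G" using a(1) g by simp
      ultimately show "D \<in> lcosets ?K'" unfolding LCOSETS_def by blast
    qed
    show "(\<lambda>D. D #> g) ` (lcosets ?K') \<subseteq> lcosets K"
    proof
      fix C assume "C \<in> (\<lambda>D. D #> g) ` (lcosets ?K')"
      then obtain b where b: "b \<in> carrier G" "C = (b <# ?K') #> g" unfolding LCOSETS_def by blast
      have "b <# ?K' = ((b \<otimes> g) <# K) #> inv g" using coset[of "b \<otimes> g"] b g by (simp add: m_assoc)
      then have "C = (b \<otimes> g) <# K"
        using b cancel[of "(b \<otimes> g) <# K" "inv g"] l_coset_subset_G[OF KG] g by simp
      moreover have "b \<otimes> g \<in> carrier G" using b(1) g by simp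
      ultimately show "C \<in> lcosets K" unfolding LCOSETS_def by blast
    qed
  qed
  have "(h <# C) #> inv g = h <# (C #> inv g)" if "h \<in> carrier G" "C \<in> lcosets K" for h C
    using coset_assoc[OF that(1) inv_closed[OF g] lcosets_subset[OF K that(2)]] by simp
  then show ?thesis using HGS_cyclic_transport[OF K K' \<phi> _ hgs] by blast
qed

section \<open>Conjugacy of the point stabilisers\<close>

context group
begin

lemma card_conj:
  assumes "g \<in> carrier G" "S \<subseteq> carrier G"
  shows "card (g <# S #> inv g) = card S"
proof -
  have "g <# S #> inv g = (\<lambda>s. g \<otimes> s \<otimes> inv g) ` S" using conj_mem_iff by blast
  moreover have "inj_on (\<lambda>s. g \<otimes> s \<otimes> inv g) S"
    using assms by (intro inj_onI) (simp add: subsetD)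
  ultimately show ?thesis by (simp add: card_image)
qed

lemma eq_conj_if_subset_conj:
  assumes fin: "finite (carrier G)" and H: "subgroup H G" and g: "g \<in> carrier G"
    and sub: "K \<subseteq> g <# H #> inv g" and card: "card K = card H"
  shows "H = inv g <# K #> inv (inv g)"
proof -
  have HG: "H \<subseteq> carrier G" using subgroup.subset[OF H] .
  have "g <# H #> inv g \<subseteq> carrier G"
    using g HG by (simp add: l_coset_subset_G r_coset_subset_G)
  then have "K = g <# H #> inv g"
    using card_subset_eq[OF finite_subset[OF _ fin] sub] card card_conj[OF g HG] by simp
  then show ?thesis
    using subgroup_conjugation_is_surj0[OF inv_closed[OF g] HG] g by simp
qed

end

context coset_coordinates
begin

lemma coord_onto:
  assumes "b \<in> {0..<n}" shows "\<exists>g\<in>carrier G. \<kappa> (g <# K) = b"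
proof -
  have "b \<in> \<kappa> ` (lcosets K)" using coord_bij assms by (simp add: bij_betw_def)
  then obtain C where "C \<in> lcosets K" "b = \<kappa> C" by blast
  then show ?thesis unfolding LCOSETS_def by blast
qed

lemma faithful_if_core_free:
  assumes core_free: "(\<Inter>g\<in>carrier G. g <# K #> inv g) = {\<one>}"
  shows "faithful_affine_rep G n A (\<lambda>g. \<kappa> (g <# K))"
proof (unfold_locales)
  fix w assume w: "w \<in> carrier G" "A w = 1" "\<kappa> (w <# K) = 0"
  have "w \<in> g <# K #> inv g" if g: "g \<in> carrier G" for g
  proof -
    have "w <# (g <# K) = g <# K"
      using lcos_fixed_iff_cong[OF w(1) lcos_K_in_lcosets[OF g]] w(2,3) by simp
    then show ?thesis using lcos_fixed_iff_conj[OF subgroup_K g w(1)] by simp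
  qed
  then show "w = \<one>" using core_free by blast
qed

lemma subset_conj_if_common_fixed_point:
  assumes S: "S \<subseteq> carrier G" and fixed: "\<And>w. w \<in> S \<Longrightarrow> [A w * y + \<kappa> (w <# K) = y] (mod n)"
  obtains g where "g \<in> carrier G" "S \<subseteq> g <# K #> inv g"
proof -
  obtain g where g: "g \<in> carrier G" "\<kappa> (g <# K) = y mod n"
    using coord_onto[of "y mod n"] coord_modulus_gt_1 by auto
  have "S \<subseteq> g <# K #> inv g"
  proof
    fix w assume "w \<in> S"
    then have w: "w \<in> carrier G" using S by blast
    have g_y: "[\<kappa> (g <# K) = y] (mod n)" using g(2) by (simp add: cong_def)
    then have "[A w * \<kappa> (g <# K) + \<kappa> (w <# K) = A w * y + \<kappa> (w <# K)] (mod n)"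
      by (intro cong_add cong_mult cong_refl)
    also have "[A w * y + \<kappa> (w <# K) = y] (mod n)" using fixed[OF \<open>w \<in> S\<close>] .
    also have "[y = \<kappa> (g <# K)] (mod n)" using g_y by (rule cong_sym)
    finally have "w <# (g <# K) = g <# K"
      using lcos_fixed_iff_cong[OF w lcos_K_in_lcosets[OF g(1)]] by simp
    then show "w \<in> g <# K #> inv g" using lcos_fixed_iff_conj[OF subgroup_K g(1) w] by simp
  qed
  then show ?thesis using that g(1) by blast
qed

end

lemma (in group) conj_if_HGS_cyclic:
  assumes fin: "finite (carrier G)" and G': "subgroup G' G"
    and core_free: "(\<Inter>g\<in>carrier G. g <# G' #> inv g) = {\<one>}"
    and p: "prime p" "odd p" and e: "e \<ge> 1" and card_G': "card (lcosets G') = p ^ e"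
    and hgs_G': "HGS_cyclic G G'" and H: "subgroup H G"
    and card_H: "card (lcosets H) = card (lcosets G')" and hgs_H: "HGS_cyclic G H"
  shows "\<exists>g\<in>carrier G. H = g <# G' #> inv g"
proof -
  define n where "n = int (p ^ e)"
  have "card (lcosets G') > 1"
    using one_less_power[OF prime_gt_1_nat[OF p(1)], of e] e card_G' by simp
  then obtain \<kappa>1 A1 \<kappa>2 A2 where
    "coset_coordinates G G' n \<kappa>1 A1" "coset_coordinates G H n \<kappa>2 A2"
    using coset_coordinates_of_HGS_cyclic[OF G' hgs_G'] coset_coordinates_of_HGS_cyclic[OF H hgs_H]
      card_H card_G' unfolding n_def by metis
  then interpret C1: coset_coordinates G G' n \<kappa>1 A1 + C2: coset_coordinates G H n \<kappa>2 A2 .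
  interpret affine_rep_pair G n A1 "\<lambda>g. \<kappa>1 (g <# G')" A2 "\<lambda>g. \<kappa>2 (g <# H)" p e
  proof (intro affine_rep_pair.intro affine_rep_pair_axioms.intro)
    show "faithful_affine_rep G n A1 (\<lambda>g. \<kappa>1 (g <# G'))" by (rule C1.faithful_if_core_free[OF core_free])
    show "affine_rep G n A2 (\<lambda>g. \<kappa>2 (g <# H))"
      by (rule C2.affine_rep_axioms)
  qed (use p n_def C2.coord_onto in auto)
  obtain y where y: "\<And>w. w \<in> G' \<Longrightarrow> [A2 w * y + \<kappa>2 (w <# H) = y] (mod n)"
    using stabilizer0_common_fixed_point2 C1.stabilizer0_eq by blast
  then obtain g0 where g0: "g0 \<in> carrier G" "G' \<subseteq> g0 <# H #> inv g0"
    using C2.subset_conj_if_common_fixed_point subgroup.subset[OF G'] by metis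
  have "card (lcosets G') * card G' = card (lcosets G') * card H"
    using l_lagrange[OF fin G'] l_lagrange[OF fin H] card_H by simp
  then have "card G' = card H" using \<open>card (lcosets G') > 1\<close> by simp
  then have "H = inv g0 <# G' #> inv (inv g0)"
    using eq_conj_if_subset_conj[OF fin H g0] by simp
  then show ?thesis using g0(1) by blast
qed

theorem theorem1p4:
  fixes G :: "('a, 'b) monoid_scheme" and G' H :: "'a set" and p e :: nat
  assumes "group G" and "finite (carrier G)"
    and "subgroup G' G"
    and core_free: "(\<Inter>g\<in>carrier G. g <#\<^bsub>G\<^esub> G' #>\<^bsub>G\<^esub> inv\<^bsub>G\<^esub> g) = {\<one>\<^bsub>G\<^esub>}"
    and "prime p" and "odd p" and "e \<ge> 1"
    and "card (lcosets\<^bsub>G\<^esub> G') = p ^ e"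
    and "HGS_cyclic G G'"
    and "subgroup H G"
    and "card (lcosets\<^bsub>G\<^esub> H) = card (lcosets\<^bsub>G\<^esub> G')"
  shows "HGS_cyclic G H \<longleftrightarrow> (\<exists>g\<in>carrier G. H = g <#\<^bsub>G\<^esub> G' #>\<^bsub>G\<^esub> inv\<^bsub>G\<^esub> g)"
proof
  assume "HGS_cyclic G H"
  then show "\<exists>g\<in>carrier G. H = g <#\<^bsub>G\<^esub> G' #>\<^bsub>G\<^esub> inv\<^bsub>G\<^esub> g"
    using group.conj_if_HGS_cyclic[OF assms(1-2)] assms(3-11) by blast
next
  assume "\<exists>g\<in>carrier G. H = g <#\<^bsub>G\<^esub> G' #>\<^bsub>G\<^esub> inv\<^bsub>G\<^esub> g"
  then show "HGS_cyclic G H" using group.HGS_cyclic_conj[OF assms(1,3) _ assms(9)] by blast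
qed

end
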